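(* Fix $\alpha\in(0,1]$, $\lambda,\mu,q>0$, $c_\alpha>0$, $k\ge1$, $a>0$, $b\ge0$, and let $W_q,Z_q,C_q,S,G,m_\alpha$ and $J_x$ be as in the context. Set $z(a,J_0)=\int_0^a(J_0-ky)\frac{\mu}{\alpha}e^{-\frac{\mu}{\alpha}y}dy=J_0(1-e^{-\frac{\mu}{\alpha}a})-k\,m_\alpha(a)$. Then: (1) For $0\le x\le b$, $J_x=\frac{W_q(x)}{W_q(b)}J_b+\Big(Z_q(x)-\frac{W_q(x)}{W_q(b)}Z_q(b)\Big)z(a,J_0)$; in particular, with $j_x=J_x-z(a,J_0)Z_q(x)$, one has $j_x=\frac{W_q(x)}{W_q(b)}j_b$ for $0\le x\le b$. (2) $J_x=0$ for $x<-a$; $J_x=kx+J_0$ for $x\in[-a,0]$; $J_x=kG(a,x)+J_0S(a,x)$ for $x\in(0,b]$; and $J_0=\frac{1-k\,\partial_bG(a,b)}{\partial_bS(a,b)}=\frac{1-k\,m_\alpha(a)C_q'(b)}{e^{-\frac{\mu}{\alpha}a}C_q'(b)+qW_q(b)}$.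
   Context: Let $N$ be a Poisson process with rate $\lambda$ and $U_i$ i.i.d. exponential claims with rate $\mu$ (mean $1/\mu$), independent of $N$; fix the retention $\alpha$ and consider the surplus $Y_t=x+c_\alpha t-\sum_{i=1}^{N_t}\alpha U_i$ (in the paper $c_\alpha=c-(1-\alpha)(1+\eta_2)\lambda\mu>0$). Consider the policy: whenever the reserve lies in $[-a,0)$ (initially or after a claim) capital is injected immediately to bring it back to $0$, at cost $k$ per unit; if a claim takes the reserve below $-a$, the company is ruined and everything stops; dividends are paid as soon as the reserve reaches the upper level $b$ (reflection at $b$). $J_x$ denotes the expected value, for initial reserve $x\le b$, of the discounted (rate $q$) dividends minus $k$ times the discounted capital injections up to ruin under this policy. Let $\kappa(\theta)=c_\alpha\theta-\frac{\alpha\lambda\theta}{\mu+\alpha\theta}$, let $\rho_-\le0\le\Phi_q$ be the roots of $\alpha c_\alpha\theta^2+(c_\alpha\mu-\alpha\lambda-\alpha q)\theta-\mu q=0$, $W_q(x)=\frac{(\alpha\Phi_q+\mu)e^{\Phi_qx}-(\alpha\rho_-+\mu)e^{\rho_-x}}{\alpha c_\alpha(\Phi_q-\rho_-)}$ for $x\ge0$, $Z_q(x)=1+q\int_0^xW_q(y)dy$, $C_q(x)=c_\alpha W_q(x)-Z_q(x)$, $m_\alpha(s)=\int_0^s y\frac{\mu}{\alpha}e^{-\frac{\mu}{\alpha}y}dy=\frac{1-e^{-\frac{\mu}{\alpha}s}(\frac{\mu}{\alpha}s+1)}{\mu/\alpha}$, $S(s,x)=e^{-\frac{\mu}{\alpha}s}C_q(x)+Z_q(x)$,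 $G(s,x)=m_\alpha(s)C_q(x)$. Derivatives in $b$ are right derivatives. *)

theory Defs
  imports "HOL-Probability.Probability"
begin

text \<open>Parameters: al = retention alpha, c = premium rate c_alpha, lam = Poisson rate lambda,
  mu = claim rate mu, q = discount rate.\<close>

definition Phi :: "real \<Rightarrow> real \<Rightarrow> real \<Rightarrow> real \<Rightarrow> real \<Rightarrow> real" where
  "Phi al c lam mu q =
     (let A = al * c; B = c * mu - al * lam - al * q in (- B + sqrt (B^2 + 4 * A * mu * q)) / (2 * A))"

definition rho :: "real \<Rightarrow> real \<Rightarrow> real \<Rightarrow> real \<Rightarrow> real \<Rightarrow> real" where
  "rho al c lam mu q =
     (let A = al * c; B = c * mu - al * lam - al * q in (- B - sqrt (B^2 + 4 * A * mu * q)) / (2 * A))"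

text \<open>Scale function W_q (the explicit formula, used for x >= 0 only).\<close>
definition Wq :: "real \<Rightarrow> real \<Rightarrow> real \<Rightarrow> real \<Rightarrow> real \<Rightarrow> real \<Rightarrow> real" where
  "Wq al c lam mu q x =
     (let P = Phi al c lam mu q; R = rho al c lam mu q in
      ((al * P + mu) * exp (P * x) - (al * R + mu) * exp (R * x)) / (al * c * (P - R)))"

definition Zq :: "real \<Rightarrow> real \<Rightarrow> real \<Rightarrow> real \<Rightarrow> real \<Rightarrow> real \<Rightarrow> real" where
  "Zq al c lam mu q x = 1 + q * integral {0..x} (Wq al c lam mu q)"

definition Cq :: "real \<Rightarrow> real \<Rightarrow> real \<Rightarrow> real \<Rightarrow> real \<Rightarrow> real \<Rightarrow> real" where
  "Cq al c lam mu q x = c * Wq al c lam mu q x - Zq al c lam mu q x"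

definition m_al :: "real \<Rightarrow> real \<Rightarrow> real \<Rightarrow> real" where
  "m_al al mu s = (1 - exp (- (mu / al) * s) * ((mu / al) * s + 1)) / (mu / al)"

definition Sfun :: "real \<Rightarrow> real \<Rightarrow> real \<Rightarrow> real \<Rightarrow> real \<Rightarrow> real \<Rightarrow> real \<Rightarrow> real" where
  "Sfun al c lam mu q s x = exp (- (mu / al) * s) * Cq al c lam mu q x + Zq al c lam mu q x"

definition Gfun :: "real \<Rightarrow> real \<Rightarrow> real \<Rightarrow> real \<Rightarrow> real \<Rightarrow> real \<Rightarrow> real \<Rightarrow> real" where
  "Gfun al c lam mu q s x = m_al al mu s * Cq al c lam mu q x"

text \<open>Sample space: omega n = (T_n, U_n), where T_n is the n-th interarrival time of the
  Poisson process (i.i.d. exponential with rate lam) and U_n is the n-th claim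
  (i.i.d. exponential with rate mu), all independent.\<close>
definition claim_space :: "real \<Rightarrow> real \<Rightarrow> (nat \<Rightarrow> real \<times> real) measure" where
  "claim_space lam mu =
     (\<Pi>\<^sub>M n\<in>UNIV. density lborel (exponential_density lam) \<Otimes>\<^sub>M density lborel (exponential_density mu))"

definition arrival :: "(nat \<Rightarrow> real \<times> real) \<Rightarrow> nat \<Rightarrow> real" where
  "arrival \<omega> n = (\<Sum>i<n. fst (\<omega> i))"

text \<open>Reserve just before a claim, after having started at y in [0,b] right after the previous
  claim and a waiting time T (reflection at b), and just after the claim of size U.\<close>
definition post_claim :: "real \<Rightarrow> real \<Rightarrow> real \<Rightarrow> real \<Rightarrow> real \<Rightarrow> real \<Rightarrow> real" where
  "post_claim al c b y T U = min b (y + c * T) - al * U"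

text \<open>Controlled reserve right after the n-th claim and the injection at that time
  (None = ruined).  Start: ruin if x < -a, injection up to 0 if x in [-a,0).\<close>
primrec state :: "real \<Rightarrow> real \<Rightarrow> real \<Rightarrow> real \<Rightarrow> real \<Rightarrow> (nat \<Rightarrow> real \<times> real) \<Rightarrow> nat \<Rightarrow> real option" where
  "state al c a b x \<omega> 0 = (if x < - a then None else Some (max 0 x))"
| "state al c a b x \<omega> (Suc n) =
     (case state al c a b x \<omega> n of
        None \<Rightarrow> None
      | Some y \<Rightarrow> (let z = post_claim al c b y (fst (\<omega> n)) (snd (\<omega> n)) in
                   if z < - a then None else Some (max 0 z)))"

text \<open>Discounted dividends paid during the inter-claim period starting at time s with reserve
  y in [0,b] and of length T: the reserve reaches b at time s + (b-y)/c and dividends are then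
  paid at rate c (reflection at b), i.e. c * integral of exp(-q t) over [s+(b-y)/c, s+T].\<close>
definition div_period :: "real \<Rightarrow> real \<Rightarrow> real \<Rightarrow> real \<Rightarrow> real \<Rightarrow> real \<Rightarrow> real" where
  "div_period c q b y s T =
     (let h = (b - y) / c in
      if h < T then c / q * (exp (- q * (s + h)) - exp (- q * (s + T))) else 0)"

definition injection :: "real \<Rightarrow> real \<Rightarrow> real" where
  "injection a z = (if - a \<le> z \<and> z < 0 then - z else 0)"

definition payoff :: "real \<Rightarrow> real \<Rightarrow> real \<Rightarrow> real \<Rightarrow> real \<Rightarrow> real \<Rightarrow> real \<Rightarrow> (nat \<Rightarrow> real \<times> real) \<Rightarrow> real" where
  "payoff al c q k a b x \<omega> =
     (if - a \<le> x \<and> x < 0 then - k * (- x) else 0)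
     + (\<Sum>n. case state al c a b x \<omega> n of
              None \<Rightarrow> 0
            | Some y \<Rightarrow>
                div_period c q b y (arrival \<omega> n) (fst (\<omega> n))
                - k * exp (- q * arrival \<omega> (Suc n))
                    * injection a (post_claim al c b y (fst (\<omega> n)) (snd (\<omega> n))))"

definition J :: "real \<Rightarrow> real \<Rightarrow> real \<Rightarrow> real \<Rightarrow> real \<Rightarrow> real \<Rightarrow> real \<Rightarrow> real \<Rightarrow> real \<Rightarrow> real" where
  "J al c lam mu q k a b x = integral\<^sup>L (claim_space lam mu) (payoff al c q k a b x)"

definition zfun :: "real \<Rightarrow> real \<Rightarrow> real \<Rightarrow> real \<Rightarrow> real \<Rightarrow> real" where
  "zfun al mu k a J0 = J0 * (1 - exp (- (mu / al) * a)) - k * m_al al mu a"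

end

(*
  On [0, b] the value J satisfies the one-claim recursion
    J x = E [dividends paid before the first claim + e^(-q T) J (min b (x + c T) - alpha U)],
  where J vanishes below -a and equals k y + J_0 on [-a, 0).  The candidate
  V = A W_q + z Z_q, a combination of e^(Phi x) and e^(rho x), satisfies the same recursion:
  the integrals over the exponential claim and waiting time are explicit, the Lundberg
  equation kappa(theta) = q at theta in {Phi, rho} makes them collapse, and the choice
  J_0 = (1 - k G'(b)) / S'(b) is exactly the condition V'(b) = 1 needed at the barrier.
  The recursion contracts bounded functions by the factor E e^(-q T) = lam / (lam + q) < 1,
  hence J = V, which gives all the formulas.
*)

theory Submission
  imports Defs
begin

lemma quadratic_factor_opposite_roots:
  fixes A B C :: real
  assumes "0 < A" "0 < C"
  defines "r1 \<equiv> (- B + sqrt (B\<^sup>2 + 4 * A * C)) / (2 * A)"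
    and "r2 \<equiv> (- B - sqrt (B\<^sup>2 + 4 * A * C)) / (2 * A)"
  shows "0 < r1" "r2 < 0" "A * x\<^sup>2 + B * x - C = A * (x - r1) * (x - r2)"
proof -
  define s where "s = sqrt (B\<^sup>2 + 4 * A * C)"
  have s2: "s\<^sup>2 = B\<^sup>2 + 4 * A * C"
    unfolding s_def using assms(1,2) by (simp add: add_nonneg_pos)
  have "\<bar>B\<bar> < s"
    unfolding s_def using assms(1,2) by (metis real_sqrt_abs real_sqrt_less_mono less_add_same_cancel1 mult_pos_pos zero_less_numeral)
  then show "0 < r1" "r2 < 0"
    unfolding r1_def r2_def s_def[symmetric] using assms(1) by (auto intro!: divide_pos_pos divide_neg_pos)
  have "A * (x - r1) * (x - r2) = A * x\<^sup>2 + B * x + (B\<^sup>2 - s\<^sup>2) / (4 * A)"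
    unfolding r1_def r2_def s_def[symmetric] using assms(1) by (simp add: field_simps power2_eq_square)
  also have "\<dots> = A * x\<^sup>2 + B * x - C"
    using s2 assms(1) by simp
  finally show "A * x\<^sup>2 + B * x - C = A * (x - r1) * (x - r2)" ..
qed

lemma has_bochner_integral_exp_tail:
  fixes h \<beta> :: real
  assumes "0 < \<beta>"
  shows "has_bochner_integral lborel (\<lambda>t. indicator {h<..} t * exp (- \<beta> * t)) (exp (- \<beta> * h) / \<beta>)"
proof -
  let ?F = "\<lambda>t. - exp (- \<beta> * t) / \<beta>"
  have F': "(?F has_real_derivative exp (- \<beta> * t)) (at t)" for t
    using assms by (auto intro!: derivative_eq_intros)
  have F_h: "((?F \<circ> real_of_ereal) \<longlongrightarrow> - exp (- \<beta> * h) / \<beta>) (at_right (ereal h))"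
    using assms by (auto simp: ereal_tendsto_simps intro!: tendsto_eq_intros)
  have "((\<lambda>t. exp (- \<beta> * t)) \<longlongrightarrow> 0) at_top"
    using assms
    by (auto intro!: exp_at_bot[THEN filterlim_compose] filterlim_tendsto_pos_mult_at_top filterlim_ident
             simp: filterlim_uminus_at_bot)
  then have F_inf: "((?F \<circ> real_of_ereal) \<longlongrightarrow> 0) (at_left \<infinity>)"
    unfolding ereal_tendsto_simps
    by (rule filterlim_compose[rotated]) (use assms in \<open>auto intro!: tendsto_eq_intros filterlim_ident\<close>)
  note FTC = interval_integral_FTC_nonneg[where F = ?F and a = "ereal h" and b = \<infinity>, OF _ F' _ _ F_h F_inf]
  have "set_integrable lborel (einterval (ereal h) \<infinity>) (\<lambda>t. exp (- \<beta> * t))"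
    and "(LBINT t=ereal h..\<infinity>. exp (- \<beta> * t)) = exp (- \<beta> * h) / \<beta>"
    using FTC by auto
  then show ?thesis
    by (simp add: has_bochner_integral_iff set_integrable_def einterval_eq_Ici
        interval_lebesgue_integral_def set_lebesgue_integral_def)
qed

lemma has_bochner_integral_exponential_Laplace:
  fixes l s :: real
  assumes "0 < l" "0 \<le> s"
  shows "has_bochner_integral (density lborel (exponential_density l)) (\<lambda>t. exp (- s * t)) (l / (l + s))"
proof -
  have "has_bochner_integral lborel (\<lambda>t. l * (indicator {0<..} t * exp (- (l + s) * t)))
          (l * (exp (- (l + s) * 0) / (l + s)))"
    using assms by (intro has_bochner_integral_mult_right has_bochner_integral_exp_tail) simp
  then have "has_bochner_integral lborel (\<lambda>t. l * (indicator {0<..} t * exp (- (l + s) * t))) (l / (l + s))"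
    by simp
  moreover have "AE t in lborel. l * (indicator {0<..} t * exp (- (l + s) * t))
                   = exponential_density l t *\<^sub>R exp (- s * t)"
    using AE_lborel_singleton[of 0]
    by eventually_elim (auto simp: exponential_density_def indicator_def algebra_simps mult_exp_exp)
  ultimately have "has_bochner_integral lborel (\<lambda>t. exponential_density l t *\<^sub>R exp (- s * t)) (l / (l + s))"
    by (subst has_bochner_integral_cong_AE[symmetric]) auto
  then show ?thesis
    using assms(1)
    by (simp add: has_bochner_integral_iff integrable_density integral_density exponential_density_nonneg)
qed

lemma has_bochner_integral_exp_affine:
  fixes \<beta> \<gamma> h :: real
  assumes "0 \<le> h" "\<gamma> \<noteq> 0"
  shows "has_bochner_integral lborel (\<lambda>t. exp (\<beta> + \<gamma> * t) * indicator {0..h} t)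
           ((exp (\<beta> + \<gamma> * h) - exp \<beta>) / \<gamma>)"
proof -
  have "has_bochner_integral lborel (\<lambda>t. exp (\<beta> + \<gamma> * t) * indicator {0..h} t)
          (exp (\<beta> + \<gamma> * h) / \<gamma> - exp (\<beta> + \<gamma> * 0) / \<gamma>)"
    by (rule has_bochner_integral_FTC_Icc_real) (use assms in \<open>auto intro!: derivative_eq_intros\<close>)
  then show ?thesis
    by (simp add: diff_divide_distrib)
qed

text \<open>Contribution of the claims that take the reserve \<open>w\<close> into \<open>[-a, 0)\<close>, where the value is
  \<open>k y + J\<^sub>0\<close>: this is where \<open>z(a, J\<^sub>0)\<close> comes from.\<close>

lemma has_bochner_integral_exponential_linear:
  fixes al mu k a w J0 :: real
  assumes "0 < al" "0 < mu" "0 \<le> a"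
  shows "has_bochner_integral lborel
           (\<lambda>u. mu * exp (- u * mu) * (k * (w - al * u) + J0) * indicator {w / al .. (w + a) / al} u)
           (exp (- mu * w / al) * zfun al mu k a J0)"
proof -
  define G where "G u = - exp (- u * mu) * (k * (w - al * u) + J0) + k * al / mu * exp (- u * mu)" for u
  have "has_bochner_integral lborel
          (\<lambda>u. mu * exp (- u * mu) * (k * (w - al * u) + J0) * indicator {w / al .. (w + a) / al} u)
          (G ((w + a) / al) - G (w / al))"
    using assms
    by (intro has_bochner_integral_FTC_Icc_real)
       (auto simp: G_def field_simps intro!: derivative_eq_intros divide_right_mono)
  moreover have "G ((w + a) / al) - G (w / al) = exp (- mu * w / al) * zfun al mu k a J0"
  proof -
    define E where "E = exp (- mu * w / al)"
    have "exp (- ((w + a) / al) * mu) = E * exp (- (mu / al) * a)" "exp (- (w / al) * mu) = E"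
      unfolding E_def using assms(1) by (simp_all add: exp_add[symmetric] field_simps)
    moreover have "k * (w - al * ((w + a) / al)) + J0 = J0 - k * a" "k * (w - al * (w / al)) + J0 = J0"
      using assms(1) by (simp_all add: field_simps)
    ultimately show ?thesis
      unfolding G_def zfun_def m_al_def E_def[symmetric] using assms by (simp add: field_simps)
  qed
  ultimately show ?thesis by simp
qed

lemma div_period_shift: "div_period c q b y (t + s) T = exp (- q * t) * div_period c q b y s T"
  unfolding div_period_def Let_def by (simp add: algebra_simps exp_add[symmetric] right_diff_distrib)

lemma measurable_div_period [measurable]:
  assumes [measurable]: "f \<in> borel_measurable M" "g \<in> borel_measurable M" "h \<in> borel_measurable M"
  shows "(\<lambda>x. div_period c q b (f x) (g x) (h x)) \<in> borel_measurable M"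
  unfolding div_period_def Let_def by measurable

lemma div_period_bounds:
  assumes "0 < c" "0 < q" "y \<le> b"
  shows "0 \<le> div_period c q b y s T" "div_period c q b y s T \<le> c / q * exp (- q * s)"
proof -
  define h where "h = (b - y) / c"
  have "0 \<le> h"
    unfolding h_def using assms by simp
  then have "exp (- q * (s + h)) \<le> exp (- q * s)"
    using assms(2) by (simp add: algebra_simps)
  then have "exp (- q * (s + h)) - exp (- q * (s + T)) \<le> exp (- q * s)"
    by (smt (verit) exp_gt_zero)
  moreover have "h < T \<Longrightarrow> 0 \<le> exp (- q * (s + h)) - exp (- q * (s + T))"
    using assms(2) by simp
  ultimately show "0 \<le> div_period c q b y s T" "div_period c q b y s T \<le> c / q * exp (- q * s)"
    unfolding div_period_def Let_def h_def[symmetric] using assms(1,2)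
    by (auto intro!: divide_right_mono mult_left_mono)
qed

lemma bounded_contraction_eq_0:
  fixes f :: "'a \<Rightarrow> real"
  assumes "0 \<le> \<theta>" "\<theta> < 1"
    and bounded: "\<And>y. y \<in> A \<Longrightarrow> \<bar>f y\<bar> \<le> M"
    and contraction: "\<And>B x. (\<And>y. y \<in> A \<Longrightarrow> \<bar>f y\<bar> \<le> B) \<Longrightarrow> x \<in> A \<Longrightarrow> \<bar>f x\<bar> \<le> \<theta> * B"
    and "x \<in> A"
  shows "f x = 0"
proof -
  have "\<bar>f y\<bar> \<le> \<theta> ^ n * M" if "y \<in> A" for n y
    using that
  proof (induction n arbitrary: y)
    case 0
    then show ?case using bounded by simp
  next
    case (Suc n)
    then show ?case using contraction[of "\<theta> ^ n * M"] by (simp add: mult.assoc)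
  qed
  moreover have "(\<lambda>n. \<theta> ^ n * M) \<longlonglongrightarrow> 0"
    using assms(1,2) by (intro tendsto_mult_left_zero LIMSEQ_power_zero) auto
  ultimately have "\<bar>f x\<bar> \<le> 0"
    using \<open>x \<in> A\<close> by (intro LIMSEQ_le_const[of "\<lambda>n. \<theta> ^ n * M"]) auto
  then show ?thesis by simp
qed

context sequence_space
begin

lemma nn_integral_PiM_iter:
  assumes [measurable]: "f \<in> borel_measurable S"
  shows "(\<integral>\<^sup>+\<omega>. f \<omega> \<partial>S) = (\<integral>\<^sup>+s. \<integral>\<^sup>+\<omega>. f (case_nat s \<omega>) \<partial>S \<partial>M)"
proof -
  have "(\<integral>\<^sup>+\<omega>. f \<omega> \<partial>S) = (\<integral>\<^sup>+\<omega>. f \<omega> \<partial>distr (M \<Otimes>\<^sub>M S) S (\<lambda>(s, \<omega>). case_nat s \<omega>))"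
    by (simp add: PiM_iter)
  also have "\<dots> = (\<integral>\<^sup>+y. f (case_nat (fst y) (snd y)) \<partial>(M \<Otimes>\<^sub>M S))"
    by (subst nn_integral_distr) (auto simp: split_beta')
  also have "\<dots> = (\<integral>\<^sup>+s. \<integral>\<^sup>+\<omega>. f (case_nat s \<omega>) \<partial>S \<partial>M)"
    by (subst P.nn_integral_fst[symmetric]) auto
  finally show ?thesis .
qed

lemma measurable_case_nat_PiM [measurable]: "(\<lambda>(s, \<omega>). case_nat s \<omega>) \<in> measurable (M \<Otimes>\<^sub>M S) S"
  by measurable

lemma integrable_PiM_iter:
  fixes f :: "(nat \<Rightarrow> 'a) \<Rightarrow> real"
  assumes "integrable S f"
  shows "integrable (M \<Otimes>\<^sub>M S) (\<lambda>y. f (case_nat (fst y) (snd y)))"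
proof -
  have "integrable (distr (M \<Otimes>\<^sub>M S) S (\<lambda>(s, \<omega>). case_nat s \<omega>)) f"
    unfolding PiM_iter by (rule assms)
  then show ?thesis
    using assms by (subst (asm) integrable_distr_eq) (auto simp: split_beta')
qed

lemma integral_PiM_iter:
  fixes f :: "(nat \<Rightarrow> 'a) \<Rightarrow> real"
  assumes "f \<in> borel_measurable S"
  shows "(\<integral>\<omega>. f \<omega> \<partial>S) = (\<integral>y. f (case_nat (fst y) (snd y)) \<partial>(M \<Otimes>\<^sub>M S))"
proof -
  have "(\<integral>\<omega>. f \<omega> \<partial>S) = (\<integral>\<omega>. f \<omega> \<partial>distr (M \<Otimes>\<^sub>M S) S (\<lambda>(s, \<omega>). case_nat s \<omega>))"
    unfolding PiM_iter ..
  also have "\<dots> = (\<integral>y. f (case_nat (fst y) (snd y)) \<partial>(M \<Otimes>\<^sub>M S))"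
    using assms by (subst integral_distr) (auto simp: split_beta')
  finally show ?thesis .
qed

lemma AE_PiM_iter:
  assumes "AE \<omega> in S. P \<omega>"
  shows "AE y in M \<Otimes>\<^sub>M S. P (case_nat (fst y) (snd y))"
proof -
  have "AE \<omega> in distr (M \<Otimes>\<^sub>M S) S (\<lambda>(s, \<omega>). case_nat s \<omega>). P \<omega>"
    unfolding PiM_iter by (rule assms)
  from AE_distrD[OF measurable_case_nat_PiM this] show ?thesis
    by (simp add: split_beta')
qed

end

section \<open>The roots \<open>\<Phi>\<close>, \<open>\<rho>\<close> and the scale functions\<close>

locale injection_barrier_model =
  fixes al c lam mu q k a b :: real
  assumes al_pos: "0 < al" and lam_pos: "0 < lam" and mu_pos: "0 < mu" and q_pos: "0 < q"
    and c_pos: "0 < c" and k_nonneg: "0 \<le> k" and a_pos: "0 < a" and b_nonneg: "0 \<le> b"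
begin

abbreviation "\<Phi> \<equiv> Phi al c lam mu q"
abbreviation "\<rho> \<equiv> rho al c lam mu q"
abbreviation "W \<equiv> Wq al c lam mu q"
abbreviation "Z \<equiv> Zq al c lam mu q"
abbreviation "JJ \<equiv> J al c lam mu q k a b"

lemma Phi_pos: "0 < \<Phi>" and rho_neg: "\<rho> < 0"
  and Lundberg_factor: "al * c * x\<^sup>2 + (c * mu - al * lam - al * q) * x - mu * q = al * c * (x - \<Phi>) * (x - \<rho>)"
proof -
  have pos: "0 < al * c" "0 < mu * q"
    using al_pos c_pos mu_pos q_pos by simp_all
  note roots = quadratic_factor_opposite_roots[OF pos, where B = "c * mu - al * lam - al * q"]
  have Phi_eq: "\<Phi> = (- (c * mu - al * lam - al * q) + sqrt ((c * mu - al * lam - al * q)\<^sup>2 + 4 * (al * c) * (mu * q))) / (2 * (al * c))"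
    and rho_eq: "\<rho> = (- (c * mu - al * lam - al * q) - sqrt ((c * mu - al * lam - al * q)\<^sup>2 + 4 * (al * c) * (mu * q))) / (2 * (al * c))"
    unfolding Phi_def rho_def Let_def by (simp_all add: mult.assoc)
  show "0 < \<Phi>"
    unfolding Phi_eq by (fact roots(1))
  show "\<rho> < 0"
    unfolding rho_eq by (fact roots(2))
  show "al * c * x\<^sup>2 + (c * mu - al * lam - al * q) * x - mu * q = al * c * (x - \<Phi>) * (x - \<rho>)"
    unfolding Phi_eq rho_eq by (fact roots(3))
qed

text \<open>For \<open>\<theta> \<in> {\<Phi>, \<rho>}\<close> this is the equation \<open>\<kappa>(\<theta>) = q\<close> multiplied by \<open>\<mu> + \<alpha>\<theta>\<close>.\<close>

lemma Lundberg_eq: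
  assumes "\<theta> = \<Phi> \<or> \<theta> = \<rho>"
  shows "(lam + q - c * \<theta>) * (mu + al * \<theta>) = lam * mu"
proof -
  have "al * c * \<theta>\<^sup>2 + (c * mu - al * lam - al * q) * \<theta> - mu * q = 0"
    using assms Lundberg_factor[of \<theta>] by auto
  then show ?thesis by (simp add: algebra_simps power2_eq_square)
qed

lemma mu_al_rho_pos: "0 < mu + al * \<rho>"
proof -
  \<comment> \<open>At \<open>t = -\<mu>/\<alpha>\<close> the quadratic equals \<open>\<lambda>\<mu> > 0\<close>, so \<open>t\<close> lies outside \<open>[\<rho>, \<Phi>]\<close>.\<close>
  define t where "t = - mu / al"
  have "(lam + q - c * t) * (mu + al * t) = 0"
    unfolding t_def using al_pos by simp
  then have "al * c * t\<^sup>2 + (c * mu - al * lam - al * q) * t - mu * q = lam * mu"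
    by (simp add: algebra_simps power2_eq_square)
  then have "0 < (al * c) * ((t - \<Phi>) * (t - \<rho>))"
    unfolding Lundberg_factor using lam_pos mu_pos by (simp add: mult.assoc)
  then have "0 < (t - \<Phi>) * (t - \<rho>)"
    using al_pos c_pos zero_less_mult_pos by (metis mult_pos_pos)
  moreover have "t - \<Phi> < 0"
    unfolding t_def using divide_pos_pos[OF mu_pos al_pos] Phi_pos by linarith
  ultimately have "t < \<rho>"
    by (simp add: zero_less_mult_iff)
  then show ?thesis
    unfolding t_def using al_pos by (simp add: field_simps)
qed

lemma Lundberg_factors_pos:
  assumes "\<theta> = \<Phi> \<or> \<theta> = \<rho>"
  shows "0 < lam + q - c * \<theta>" "0 < mu + al * \<theta>"
proof -
  show pos: "0 < mu + al * \<theta>"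
    using assms mu_al_rho_pos Phi_pos al_pos mu_pos by (auto intro: add_pos_pos)
  have "0 < (lam + q - c * \<theta>) * (mu + al * \<theta>)"
    using Lundberg_eq[OF assms] lam_pos mu_pos by simp
  then show "0 < lam + q - c * \<theta>"
    using pos zero_less_mult_pos2 by blast
qed

lemmas Phi_Lundberg_factors_pos = Lundberg_factors_pos[OF disjI1[OF refl]]
lemmas rho_Lundberg_factors_pos = Lundberg_factors_pos[OF disjI2[OF refl]]

definition "wP = (al * \<Phi> + mu) / (al * c * (\<Phi> - \<rho>))"
definition "wR = - (al * \<rho> + mu) / (al * c * (\<Phi> - \<rho>))"

lemma Phi_rho_gap: "0 < \<Phi> - \<rho>"
  using Phi_pos rho_neg by simp

lemma Wq_eq: "W x = wP * exp (\<Phi> * x) + wR * exp (\<rho> * x)"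
  unfolding Wq_def wP_def wR_def Let_def by (simp only: diff_divide_distrib) (simp add: field_split_simps)

lemma wP_pos: "0 < wP" and wR_neg: "wR < 0"
  unfolding wP_def wR_def using Phi_rho_gap al_pos c_pos mu_al_rho_pos Phi_pos mu_pos
  by (auto intro!: divide_pos_pos divide_neg_pos simp: add_pos_pos add.commute)

lemma wP_wR_sum: "wP + wR = 1 / c"
proof -
  have "wP + wR = al * (\<Phi> - \<rho>) / (al * c * (\<Phi> - \<rho>))"
    unfolding wP_def wR_def add_divide_distrib[symmetric] by (simp add: algebra_simps)
  then show ?thesis
    using Phi_rho_gap al_pos by simp
qed

lemma Phi_rho_prod: "al * c * (\<Phi> * \<rho>) = - mu * q"
  using Lundberg_factor[of 0] by (simp add: algebra_simps)

lemma wP_wR_weighted_sum: "q * (wP / \<Phi> + wR / \<rho>) = 1"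
proof -
  define D where "D = al * c * (\<Phi> - \<rho>)"
  have nz: "D \<noteq> 0" "\<Phi> \<noteq> 0" "\<rho> \<noteq> 0"
    unfolding D_def using Phi_rho_gap al_pos c_pos Phi_pos rho_neg by auto
  have "wP / \<Phi> + wR / \<rho> = mu * (\<rho> - \<Phi>) / (D * (\<Phi> * \<rho>))"
    unfolding wP_def wR_def D_def[symmetric] using nz by (simp add: field_simps)
  also have "\<dots> = ((\<Phi> - \<rho>) * (- mu)) / ((\<Phi> - \<rho>) * (al * c * (\<Phi> * \<rho>)))"
    unfolding D_def by (simp add: algebra_simps)
  also have "\<dots> = - mu / (al * c * (\<Phi> * \<rho>))"
    using Phi_rho_gap by simp
  finally show ?thesis
    unfolding Phi_rho_prod using mu_pos q_pos by simp
qed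

lemma Wq_pos: "0 \<le> x \<Longrightarrow> 0 < W x"
proof -
  assume "0 \<le> x"
  then have "wP * exp (\<rho> * x) \<le> wP * exp (\<Phi> * x)"
    using Phi_pos rho_neg wP_pos by (simp add: mult_right_mono)
  moreover have "0 < (wP + wR) * exp (\<rho> * x)"
    using wP_wR_sum c_pos by simp
  ultimately show ?thesis
    unfolding Wq_eq by (simp add: algebra_simps)
qed

lemma Wq_0: "W 0 = 1 / c"
  unfolding Wq_eq using wP_wR_sum by simp

definition "dW x = wP * \<Phi> * exp (\<Phi> * x) + wR * \<rho> * exp (\<rho> * x)"

lemma dW_pos: "0 < dW x"
proof -
  have "0 < wP * \<Phi>" "0 < wR * \<rho>"
    using wP_pos wR_neg Phi_pos rho_neg by (auto simp: mult_neg_neg)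
  then show ?thesis
    unfolding dW_def by (simp add: add_pos_pos)
qed

lemma Wq_has_derivative: "(W has_real_derivative dW x) (at x within S)"
  unfolding dW_def Wq_eq[abs_def] by (auto intro!: derivative_eq_intros)

definition "Zexp x = 1 + q * (wP * (exp (\<Phi> * x) - 1) / \<Phi> + wR * (exp (\<rho> * x) - 1) / \<rho>)"

lemma Zexp_has_derivative: "(Zexp has_real_derivative q * W x) (at x within S)"
  unfolding Zexp_def Wq_eq using Phi_pos rho_neg
  by (auto intro!: derivative_eq_intros simp: field_simps)

lemma Zq_eq_Zexp:
  assumes "0 \<le> x"
  shows "Z x = Zexp x"
proof -
  define f where "f y = wP * (exp (\<Phi> * y) - 1) / \<Phi> + wR * (exp (\<rho> * y) - 1) / \<rho>" for y
  have "(W has_integral (f x - f 0)) {0..x}"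
  proof (rule fundamental_theorem_of_calculus[OF assms])
    fix y
    show "(f has_vector_derivative W y) (at y within {0..x})"
      unfolding f_def Wq_eq has_real_derivative_iff_has_vector_derivative[symmetric]
      using Phi_pos rho_neg by (auto intro!: derivative_eq_intros simp: field_simps)
  qed
  then have "integral {0..x} W = f x"
    by (simp add: integral_unique f_def)
  then show ?thesis
    unfolding Zq_def Zexp_def f_def by simp
qed

lemma Zq_has_derivative_right: "(Z has_real_derivative q * W b) (at_right b)"
proof -
  have "(Z has_real_derivative q * W b) (at b within {b..b+1})"
    using Zexp_has_derivative
    by (rule has_field_derivative_transform_within[where d = 1]) (use b_nonneg in \<open>auto simp: Zq_eq_Zexp\<close>)
  then show ?thesis
    using at_within_Icc_at_right[of b "b + 1"] by simp
qed

section \<open>The candidate value function\<close>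

text \<open>\<open>dC\<close> and \<open>dS\<close> are \<open>C\<^sub>q'(b)\<close> and \<open>\<partial>\<^sub>bS(a, b)\<close>.\<close>

definition "ea = exp (- (mu / al) * a)"
definition "ma = m_al al mu a"
definition "dC = c * dW b - q * W b"
definition "dS = ea * dC + q * W b"

text \<open>\<open>J0\<close> is the value of \<open>J\<^sub>0\<close> claimed by the theorem; with it, the candidate \<open>V\<close> below
  satisfies \<open>V'(b) = 1\<close>, which is what dividends paid at rate \<open>c\<close> at the barrier require.\<close>

definition "J0 = (1 - k * ma * dC) / dS"
definition "z0 = zfun al mu k a J0"
definition "AW = c * (k * ma + J0 * ea)"
definition "KP = AW * wP + z0 * q * wP / \<Phi>"
definition "KR = AW * wR + z0 * q * wR / \<rho>"
definition "V x = KP * exp (\<Phi> * x) + KR * exp (\<rho> * x)"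
definition "LP = KP * mu / (mu + al * \<Phi>)"
definition "LR = KR * mu / (mu + al * \<rho>)"

lemma ea_pos: "0 < ea" and ea_less_1: "ea < 1"
  unfolding ea_def using mu_pos al_pos a_pos by auto

lemma z0_eq: "z0 = J0 * (1 - ea) - k * ma"
  unfolding z0_def zfun_def ea_def ma_def ..

lemma dS_pos: "0 < dS"
proof -
  have "dS = ea * c * dW b + (1 - ea) * q * W b"
    unfolding dS_def dC_def by (simp add: algebra_simps)
  moreover have "0 < ea * c * dW b"
    using ea_pos c_pos dW_pos by simp
  moreover have "0 < (1 - ea) * q * W b"
    using ea_less_1 q_pos Wq_pos b_nonneg by simp
  ultimately show ?thesis by simp
qed

lemma V_eq_W_Z: "V x = AW * W x + z0 * Zexp x"
proof -
  have "AW * W x + z0 * Zexp x = V x + z0 * (1 - q * (wP / \<Phi> + wR / \<rho>))"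
    unfolding Wq_eq Zexp_def V_def KP_def KR_def using Phi_pos rho_neg by (simp add: field_simps)
  then show ?thesis
    unfolding wP_wR_weighted_sum by simp
qed

lemma V_eq_G_S:
  assumes "0 \<le> x"
  shows "k * Gfun al c lam mu q a x + J0 * Sfun al c lam mu q a x = V x"
proof -
  have "k * Gfun al c lam mu q a x + J0 * Sfun al c lam mu q a x
      = (k * ma + J0 * ea) * (c * W x - Z x) + J0 * Z x"
    unfolding Gfun_def Sfun_def Cq_def ma_def ea_def by (simp add: algebra_simps)
  also have "\<dots> = AW * W x + z0 * Z x"
    unfolding AW_def z0_eq by (simp add: algebra_simps)
  finally show ?thesis
    using V_eq_W_Z Zq_eq_Zexp[OF assms] by simp
qed

lemma V_0: "V 0 = J0"
proof -
  have "V 0 = AW / c + z0"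
    using V_eq_W_Z[of 0] Wq_0 by (simp add: Zexp_def)
  also have "AW / c = k * ma + J0 * ea"
    unfolding AW_def using c_pos by simp
  finally show ?thesis
    unfolding z0_eq by (simp add: algebra_simps)
qed

lemma V_deriv_at_barrier: "KP * \<Phi> * exp (\<Phi> * b) + KR * \<rho> * exp (\<rho> * b) = 1"
proof -
  have "KP * \<Phi> * exp (\<Phi> * b) + KR * \<rho> * exp (\<rho> * b) = AW * dW b + z0 * q * W b"
    unfolding KP_def KR_def dW_def Wq_eq using Phi_pos rho_neg by (simp add: field_simps)
  also have "\<dots> = J0 * dS + k * ma * dC"
    unfolding AW_def z0_eq dS_def dC_def by (simp add: algebra_simps)
  also have "\<dots> = 1"
    unfolding J0_def using dS_pos by simp
  finally show ?thesis .
qed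

lemma LP_Lundberg: "LP * lam = KP * (lam + q - c * \<Phi>)"
  and LR_Lundberg: "LR * lam = KR * (lam + q - c * \<rho>)"
proof -
  have "lam * mu / (mu + al * \<theta>) = lam + q - c * \<theta>" if "\<theta> = \<Phi> \<or> \<theta> = \<rho>" for \<theta>
    using Lundberg_eq[OF that] Lundberg_factors_pos(2)[OF that] by (simp add: field_simps)
  then show "LP * lam = KP * (lam + q - c * \<Phi>)" "LR * lam = KR * (lam + q - c * \<rho>)"
    unfolding LP_def LR_def by (metis times_divide_eq_right mult.commute mult.left_commute)+
qed

lemma z0_eq_LP_LR: "z0 = LP + LR"
proof -
  define D where "D = al * c * (\<Phi> - \<rho>)"
  have nz: "D \<noteq> 0" "\<Phi> \<noteq> 0" "\<rho> \<noteq> 0" "mu + al * \<Phi> \<noteq> 0" "mu + al * \<rho> \<noteq> 0"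
    unfolding D_def using Phi_rho_gap al_pos c_pos Phi_pos rho_neg
      Phi_Lundberg_factors_pos(2) rho_Lundberg_factors_pos(2) by auto
  have "wP = (mu + al * \<Phi>) / D" "wR = - ((mu + al * \<rho>) / D)"
    unfolding wP_def wR_def D_def[symmetric] using nz(1) by (simp_all add: field_simps)
  then have w: "wP / (mu + al * \<Phi>) = 1 / D" "wR / (mu + al * \<rho>) = - 1 / D"
    using nz by simp_all
  have "KP = (AW + z0 * q / \<Phi>) * wP" "KR = (AW + z0 * q / \<rho>) * wR"
    unfolding KP_def KR_def by (simp_all add: distrib_right)
  then have "LP = mu * (AW + z0 * q / \<Phi>) * (wP / (mu + al * \<Phi>))"
    and "LR = mu * (AW + z0 * q / \<rho>) * (wR / (mu + al * \<rho>))"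
    unfolding LP_def LR_def by (simp_all add: ac_simps)
  then have "LP + LR = mu * (AW + z0 * q / \<Phi>) / D - mu * (AW + z0 * q / \<rho>) / D"
    unfolding w by simp
  also have "\<dots> = z0 * (mu * q * (\<rho> - \<Phi>)) / (D * (\<Phi> * \<rho>))"
    using nz(1-3) by (simp add: field_simps)
  also have "D * (\<Phi> * \<rho>) = (\<Phi> - \<rho>) * (al * c * (\<Phi> * \<rho>))"
    unfolding D_def by (simp add: ac_simps)
  also have "\<dots> = mu * q * (\<rho> - \<Phi>)"
    unfolding Phi_rho_prod by (simp add: algebra_simps)
  finally show ?thesis
    using Phi_rho_gap mu_pos q_pos by simp
qed

abbreviation "MT \<equiv> density lborel (exponential_density lam)"
abbreviation "MU \<equiv> density lborel (exponential_density mu)"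
abbreviation "MTU \<equiv> MT \<Otimes>\<^sub>M MU"

definition "V_ext y = (if y < - a then 0 else if y < 0 then k * y + J0 else V (min y b))"

definition "V_claim w = LP * exp (\<Phi> * w) + LR * exp (\<rho> * w)"

lemma V_measurable [measurable]: "V \<in> borel_measurable borel"
  unfolding V_def[abs_def] by measurable

lemma V_ext_measurable [measurable]: "V_ext \<in> borel_measurable borel"
  unfolding V_ext_def[abs_def] by measurable

lemma V_claim_measurable [measurable]: "V_claim \<in> borel_measurable borel"
  unfolding V_claim_def[abs_def] by measurable

lemma claim_integrand_eq:
  assumes "0 \<le> w" "w \<le> b" "u \<noteq> w / al"
  shows "exponential_density mu u * V_ext (w - al * u)
    = mu * KP * (exp (\<Phi> * w + - (mu + al * \<Phi>) * u) * indicator {0 .. w / al} u)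
      + mu * KR * (exp (\<rho> * w + - (mu + al * \<rho>) * u) * indicator {0 .. w / al} u)
      + mu * exp (- u * mu) * (k * (w - al * u) + J0) * indicator {w / al .. (w + a) / al} u"
proof (cases "u < 0")
  case True
  moreover have "0 \<le> w / al"
    using assms(1) al_pos by simp
  ultimately show ?thesis
    by (simp add: exponential_density_def indicator_def)
next
  case False
  have iff: "u < w / al \<longleftrightarrow> al * u < w" "w / al < u \<longleftrightarrow> w < al * u"
      "u \<le> (w + a) / al \<longleftrightarrow> al * u \<le> w + a"
    using al_pos by (simp_all add: field_simps)
  have "0 \<le> al * u"
    using False al_pos by simp
  consider "u < w / al" | "w / al < u" "u \<le> (w + a) / al" | "(w + a) / al < u"
    using assms(3) by linarith
  then show ?thesis
  proof cases
    case 1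
    have e: "exp (- u * mu) * exp (\<theta> * (w - al * u)) = exp (\<theta> * w + - (mu + al * \<theta>) * u)" for \<theta>
      by (simp add: exp_add[symmetric] algebra_simps)
    have "V_ext (w - al * u) = V (w - al * u)"
      using 1 iff \<open>0 \<le> al * u\<close> assms(2) a_pos by (simp add: V_ext_def)
    then have "exponential_density mu u * V_ext (w - al * u)
      = mu * KP * (exp (- u * mu) * exp (\<Phi> * (w - al * u))) + mu * KR * (exp (- u * mu) * exp (\<rho> * (w - al * u)))"
      using False by (simp add: exponential_density_def V_def algebra_simps)
    then show ?thesis
      unfolding e using 1 False by (simp add: indicator_def)
  next
    case 2
    then have "V_ext (w - al * u) = k * (w - al * u) + J0"
      using iff by (simp add: V_ext_def)
    then show ?thesis
      using 2 False by (simp add: exponential_density_def indicator_def)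
  next
    case 3
    then have "V_ext (w - al * u) = 0"
      using iff by (simp add: V_ext_def)
    moreover have "w / al \<le> (w + a) / al"
      using al_pos a_pos by (simp add: divide_right_mono)
    ultimately show ?thesis
      using 3 by (simp add: indicator_def)
  qed
qed

lemma claim_exp_integral:
  assumes "\<theta> = \<Phi> \<or> \<theta> = \<rho>" "0 \<le> w"
  shows "has_bochner_integral lborel (\<lambda>u. exp (\<theta> * w + - (mu + al * \<theta>) * u) * indicator {0 .. w / al} u)
           ((exp (\<theta> * w) - exp (- mu * w / al)) / (mu + al * \<theta>))"
proof -
  have pos: "0 < mu + al * \<theta>"
    using Lundberg_factors_pos(2)[OF assms(1)] .
  have "has_bochner_integral lborel (\<lambda>u. exp (\<theta> * w + - (mu + al * \<theta>) * u) * indicator {0 .. w / al} u)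
      ((exp (\<theta> * w + - (mu + al * \<theta>) * (w / al)) - exp (\<theta> * w)) / (- (mu + al * \<theta>)))"
    using assms(2) al_pos pos by (intro has_bochner_integral_exp_affine) auto
  moreover have "\<theta> * w + - (mu + al * \<theta>) * (w / al) = - mu * w / al"
    using al_pos by (simp add: field_simps)
  moreover have "(exp (- mu * w / al) - exp (\<theta> * w)) / (- (mu + al * \<theta>))
      = (exp (\<theta> * w) - exp (- mu * w / al)) / (mu + al * \<theta>)"
    using pos by (simp add: field_simps)
  ultimately show ?thesis
    by simp
qed

lemma V_claim_integral:
  assumes w: "0 \<le> w" "w \<le> b"
  shows "(\<integral>u. V_ext (w - al * u) \<partial>MU) = V_claim w"
proof -
  define \<epsilon> where "\<epsilon> = exp (- mu * w / al)"
  have "has_bochner_integral lborel (\<lambda>u.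
        mu * KP * (exp (\<Phi> * w + - (mu + al * \<Phi>) * u) * indicator {0 .. w / al} u)
      + mu * KR * (exp (\<rho> * w + - (mu + al * \<rho>) * u) * indicator {0 .. w / al} u)
      + mu * exp (- u * mu) * (k * (w - al * u) + J0) * indicator {w / al .. (w + a) / al} u)
      (mu * KP * ((exp (\<Phi> * w) - \<epsilon>) / (mu + al * \<Phi>))
       + mu * KR * ((exp (\<rho> * w) - \<epsilon>) / (mu + al * \<rho>)) + \<epsilon> * z0)"
    unfolding \<epsilon>_def z0_def using w al_pos mu_pos a_pos
    by (intro has_bochner_integral_add has_bochner_integral_mult_right claim_exp_integral
        has_bochner_integral_exponential_linear) auto
  then have "has_bochner_integral lborel (\<lambda>u. exponential_density mu u * V_ext (w - al * u))
      (mu * KP * ((exp (\<Phi> * w) - \<epsilon>) / (mu + al * \<Phi>))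
       + mu * KR * ((exp (\<rho> * w) - \<epsilon>) / (mu + al * \<rho>)) + \<epsilon> * z0)"
    by (rule has_bochner_integral_cong_AE[THEN iffD1, rotated 3])
       (use AE_lborel_singleton[of "w / al"] in \<open>auto elim!: eventually_mono simp: claim_integrand_eq w\<close>)
  moreover have "mu * KP * ((exp (\<Phi> * w) - \<epsilon>) / (mu + al * \<Phi>))
       + mu * KR * ((exp (\<rho> * w) - \<epsilon>) / (mu + al * \<rho>)) + \<epsilon> * z0 = V_claim w"
    unfolding z0_eq_LP_LR V_claim_def LP_def LR_def by (simp add: algebra_simps diff_divide_distrib)
  ultimately show ?thesis
    using mu_pos by (simp add: integral_density exponential_density_nonneg has_bochner_integral_iff)
qed

lemma wait_integrand_eq:
  assumes "0 \<le> x" "x \<le> b"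
  defines "h \<equiv> (b - x) / c"
  shows "exponential_density lam t * (div_period c q b x 0 t + exp (- q * t) * V_claim (min b (x + c * t)))
    = lam * LP * (exp (\<Phi> * x + - (lam + q - c * \<Phi>) * t) * indicator {0..h} t)
      + lam * LR * (exp (\<rho> * x + - (lam + q - c * \<rho>) * t) * indicator {0..h} t)
      + lam * (c / q * exp (- q * h)) * (indicator {h<..} t * exp (- lam * t))
      + lam * (V_claim b - c / q) * (indicator {h<..} t * exp (- (lam + q) * t))"
proof -
  have h0: "0 \<le> h"
    unfolding h_def using assms c_pos by simp
  consider "t < 0" | "0 \<le> t" "t \<le> h" | "h < t"
    by linarith
  then show ?thesis
  proof cases
    case 1
    then show ?thesis
      using h0 by (simp add: exponential_density_def indicator_def)
  next
    case 2
    then have "min b (x + c * t) = x + c * t"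
      unfolding h_def using c_pos by (simp add: field_simps)
    moreover have "div_period c q b x 0 t = 0"
      unfolding div_period_def Let_def h_def[symmetric] using 2 by simp
    ultimately have "exponential_density lam t * (div_period c q b x 0 t + exp (- q * t) * V_claim (min b (x + c * t)))
      = lam * LP * (exp (- t * lam) * (exp (- q * t) * exp (\<Phi> * (x + c * t))))
        + lam * LR * (exp (- t * lam) * (exp (- q * t) * exp (\<rho> * (x + c * t))))"
      using 2 by (simp add: exponential_density_def V_claim_def algebra_simps)
    moreover have "exp (- t * lam) * (exp (- q * t) * exp (\<theta> * (x + c * t)))
        = exp (\<theta> * x + - (lam + q - c * \<theta>) * t)" for \<theta>
      by (simp add: exp_add[symmetric] algebra_simps)
    ultimately show ?thesis
      using 2 by (simp add: indicator_def)
  next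
    case 3
    then have "min b (x + c * t) = b"
      unfolding h_def using c_pos by (simp add: field_simps)
    moreover have "div_period c q b x 0 t = c / q * (exp (- q * h) - exp (- q * t))"
      unfolding div_period_def Let_def h_def[symmetric] using 3 by simp
    ultimately have "exponential_density lam t * (div_period c q b x 0 t + exp (- q * t) * V_claim (min b (x + c * t)))
      = lam * (c / q * exp (- q * h)) * exp (- lam * t) + lam * (V_claim b - c / q) * (exp (- t * lam) * exp (- q * t))"
      using 3 h0 by (simp only:) (simp add: exponential_density_def algebra_simps)
    moreover have "exp (- t * lam) * exp (- q * t) = exp (- (lam + q) * t)"
      by (simp add: exp_add[symmetric] algebra_simps)
    ultimately show ?thesis
      using 3 h0 by (simp add: indicator_def)
  qed
qed

lemma V_claim_at_barrier: "lam * V_claim b = (lam + q) * V b - c"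
proof -
  have "lam * V_claim b = KP * (lam + q - c * \<Phi>) * exp (\<Phi> * b) + KR * (lam + q - c * \<rho>) * exp (\<rho> * b)"
    unfolding V_claim_def LP_Lundberg[symmetric] LR_Lundberg[symmetric] by (simp add: algebra_simps)
  also have "\<dots> = (lam + q) * V b - c * (KP * \<Phi> * exp (\<Phi> * b) + KR * \<rho> * exp (\<rho> * b))"
    unfolding V_def by (simp add: algebra_simps)
  finally show ?thesis
    unfolding V_deriv_at_barrier by simp
qed

lemma wait_exp_integral:
  assumes "\<theta> = \<Phi> \<or> \<theta> = \<rho>" "0 \<le> h" "x + c * h = b"
  shows "has_bochner_integral lborel (\<lambda>t. exp (\<theta> * x + - (lam + q - c * \<theta>) * t) * indicator {0..h} t)
           ((exp (\<theta> * x) - exp (\<theta> * b) * exp (- (lam + q) * h)) / (lam + q - c * \<theta>))"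
proof -
  have pos: "0 < lam + q - c * \<theta>"
    using Lundberg_factors_pos(1)[OF assms(1)] .
  have "\<theta> * x + - (lam + q - c * \<theta>) * h = \<theta> * b + - (lam + q) * h"
    unfolding assms(3)[symmetric] by (simp add: algebra_simps)
  then have ex: "exp (\<theta> * x + - (lam + q - c * \<theta>) * h) = exp (\<theta> * b) * exp (- (lam + q) * h)"
    by (simp add: exp_add)
  have "has_bochner_integral lborel (\<lambda>t. exp (\<theta> * x + - (lam + q - c * \<theta>) * t) * indicator {0..h} t)
      ((exp (\<theta> * x + - (lam + q - c * \<theta>) * h) - exp (\<theta> * x)) / (- (lam + q - c * \<theta>)))"
    using assms(2) pos by (intro has_bochner_integral_exp_affine) auto
  moreover have "(exp (\<theta> * b) * exp (- (lam + q) * h) - exp (\<theta> * x)) / (- (lam + q - c * \<theta>))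
      = (exp (\<theta> * x) - exp (\<theta> * b) * exp (- (lam + q) * h)) / (lam + q - c * \<theta>)"
    using pos by (simp add: field_simps)
  ultimately show ?thesis
    unfolding ex by simp
qed

lemma wait_integral_value:
  "lam * LP * ((exp (\<Phi> * x) - exp (\<Phi> * b) * exp (- (lam + q) * h)) / (lam + q - c * \<Phi>))
   + lam * LR * ((exp (\<rho> * x) - exp (\<rho> * b) * exp (- (lam + q) * h)) / (lam + q - c * \<rho>))
   + lam * (c / q * exp (- q * h)) * (exp (- lam * h) / lam)
   + lam * (V_claim b - c / q) * (exp (- (lam + q) * h) / (lam + q)) = V x"
proof -
  define E where "E = exp (- (lam + q) * h)"
  have cancel: "lam * L * (X / m) = K * X" if "L * lam = K * m" "0 < m" for L K X m
  proof -
    have "lam * L * (X / m) = (L * lam) * X / m"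
      by (simp add: ac_simps)
    then show ?thesis
      using that by simp
  qed
  have exp_terms: "lam * LP * ((exp (\<Phi> * x) - exp (\<Phi> * b) * E) / (lam + q - c * \<Phi>))
       + lam * LR * ((exp (\<rho> * x) - exp (\<rho> * b) * E) / (lam + q - c * \<rho>)) = V x - E * V b"
    unfolding V_def cancel[OF LP_Lundberg Phi_Lundberg_factors_pos(1)]
      cancel[OF LR_Lundberg rho_Lundberg_factors_pos(1)]
    by (simp add: algebra_simps)
  have dividend_term: "lam * (c / q * exp (- q * h)) * (exp (- lam * h) / lam) = c / q * E"
    unfolding E_def using lam_pos by (simp add: algebra_simps mult_exp_exp)
  have barrier_term: "lam * (V_claim b - c / q) * (E / (lam + q)) = (V b - c / q) * E"
  proof -
    have "lam * (V_claim b - c / q) = lam * V_claim b - lam * c / q"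
      by (simp add: algebra_simps)
    also have "\<dots> = (lam + q) * (V b - c / q)"
      unfolding V_claim_at_barrier using q_pos by (simp add: field_simps)
    finally show ?thesis
      using lam_pos q_pos by simp
  qed
  show ?thesis
    unfolding E_def[symmetric] exp_terms dividend_term barrier_term by (simp add: algebra_simps)
qed

lemma V_wait_integral:
  assumes x: "0 \<le> x" "x \<le> b"
  shows "(\<integral>t. div_period c q b x 0 t + exp (- q * t) * V_claim (min b (x + c * t)) \<partial>MT) = V x"
proof -
  define h where "h = (b - x) / c"
  have h: "0 \<le> h" "x + c * h = b"
    unfolding h_def using x c_pos by simp_all
  have "has_bochner_integral lborel
      (\<lambda>t. exponential_density lam t * (div_period c q b x 0 t + exp (- q * t) * V_claim (min b (x + c * t))))
      (lam * LP * ((exp (\<Phi> * x) - exp (\<Phi> * b) * exp (- (lam + q) * h)) / (lam + q - c * \<Phi>))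
       + lam * LR * ((exp (\<rho> * x) - exp (\<rho> * b) * exp (- (lam + q) * h)) / (lam + q - c * \<rho>))
       + lam * (c / q * exp (- q * h)) * (exp (- lam * h) / lam)
       + lam * (V_claim b - c / q) * (exp (- (lam + q) * h) / (lam + q)))"
    unfolding wait_integrand_eq[OF x, folded h_def] using lam_pos q_pos h
    by (intro has_bochner_integral_add has_bochner_integral_mult_right wait_exp_integral
        has_bochner_integral_exp_tail) auto
  then show ?thesis
    unfolding wait_integral_value using lam_pos
    by (simp add: integral_density exponential_density_nonneg has_bochner_integral_iff)
qed

sublocale MTU: pair_prob_space MT MU
  by (simp add: pair_prob_space.intro pair_sigma_finite.intro prob_space_imp_sigma_finite
      prob_space_exponential_density lam_pos mu_pos)

lemma AE_MT_nonneg: "AE t in MT. 0 \<le> t"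
  by (subst AE_density) (auto simp: exponential_density_def)

lemma AE_MU_nonneg: "AE u in MU. 0 \<le> u"
  by (subst AE_density) (auto simp: exponential_density_def)

lemma AE_MTU_nonneg: "AE s in MTU. 0 \<le> fst s \<and> 0 \<le> snd s"
proof (rule MTU.AE_pair_measure)
  show "{s \<in> space MTU. 0 \<le> fst s \<and> 0 \<le> snd s} \<in> sets MTU"
    by measurable
  show "AE t in MT. AE u in MU. 0 \<le> fst (t, u) \<and> 0 \<le> snd (t, u)"
    using AE_MT_nonneg by eventually_elim (use AE_MU_nonneg in auto)
qed

lemma post_claim_le_b: "0 \<le> u \<Longrightarrow> y \<le> b \<Longrightarrow> post_claim al c b y t u \<le> b"
  unfolding post_claim_def using min.cobounded1[of b "y + c * t"] mult_nonneg_nonneg[of al u] al_pos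
  by linarith

definition "Vmax = k * a + \<bar>J0\<bar> + \<bar>KP\<bar> * exp (\<Phi> * b) + \<bar>KR\<bar>"

lemma V_bound:
  assumes "0 \<le> y" "y \<le> b"
  shows "\<bar>V y\<bar> \<le> \<bar>KP\<bar> * exp (\<Phi> * b) + \<bar>KR\<bar>"
proof -
  have "\<bar>KP\<bar> * exp (\<Phi> * y) \<le> \<bar>KP\<bar> * exp (\<Phi> * b)"
    using assms Phi_pos by (intro mult_left_mono) auto
  moreover have "\<bar>KR\<bar> * exp (\<rho> * y) \<le> \<bar>KR\<bar>"
    using assms rho_neg by (intro mult_left_le) (auto simp: mult_nonpos_nonneg)
  moreover have "\<bar>V y\<bar> \<le> \<bar>KP\<bar> * exp (\<Phi> * y) + \<bar>KR\<bar> * exp (\<rho> * y)"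
    unfolding V_def by (rule order_trans[OF abs_triangle_ineq]) (simp add: abs_mult)
  ultimately show ?thesis by linarith
qed

lemma V_ext_bound: "\<bar>V_ext y\<bar> \<le> Vmax"
proof -
  have V_sup: "0 \<le> \<bar>KP\<bar> * exp (\<Phi> * b) + \<bar>KR\<bar>" and "0 \<le> k * a"
    using k_nonneg a_pos by simp_all
  consider "y < - a" | "- a \<le> y" "y < 0" | "0 \<le> y"
    by linarith
  then have "\<bar>V_ext y\<bar> \<le> k * a + \<bar>J0\<bar> + (\<bar>KP\<bar> * exp (\<Phi> * b) + \<bar>KR\<bar>)"
  proof cases
    case 1
    then show ?thesis
      using V_sup \<open>0 \<le> k * a\<close> by (simp add: V_ext_def)
  next
    case 2
    then have "\<bar>k * y\<bar> \<le> k * a"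
      using k_nonneg mult_left_mono[of "- y" a k] by (simp add: abs_mult)
    moreover have "V_ext y = k * y + J0"
      using 2 by (simp add: V_ext_def)
    ultimately show ?thesis
      using V_sup abs_triangle_ineq[of "k * y" J0] by linarith
  next
    case 3
    then have "\<bar>V (min y b)\<bar> \<le> \<bar>KP\<bar> * exp (\<Phi> * b) + \<bar>KR\<bar>"
      using b_nonneg by (intro V_bound) auto
    then show ?thesis
      using 3 \<open>0 \<le> k * a\<close> a_pos by (simp add: V_ext_def)
  qed
  then show ?thesis
    unfolding Vmax_def by simp
qed

definition one_step :: "(real \<Rightarrow> real) \<Rightarrow> real \<Rightarrow> real" where
  "one_step F x = (\<integral>s. div_period c q b x 0 (fst s) + exp (- q * fst s) * F (post_claim al c b x (fst s) (snd s)) \<partial>MTU)"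

lemma one_step_integrable:
  assumes [measurable]: "F \<in> borel_measurable borel"
    and bound: "\<And>z. z \<le> b \<Longrightarrow> \<bar>F z\<bar> \<le> B" and "x \<le> b"
  shows "integrable MTU (\<lambda>s. div_period c q b x 0 (fst s) + exp (- q * fst s) * F (post_claim al c b x (fst s) (snd s)))"
proof (rule MTU.P.integrable_const_bound[where B = "c / q + B"])
  show "AE s in MTU. norm (div_period c q b x 0 (fst s) + exp (- q * fst s) * F (post_claim al c b x (fst s) (snd s)))
          \<le> c / q + B"
    using AE_MTU_nonneg
  proof eventually_elim
    case (elim s)
    have "0 \<le> div_period c q b x 0 (fst s)" "div_period c q b x 0 (fst s) \<le> c / q"
      using div_period_bounds[OF c_pos q_pos \<open>x \<le> b\<close>, of 0 "fst s"] by simp_all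
    moreover have "\<bar>exp (- q * fst s)\<bar> * \<bar>F (post_claim al c b x (fst s) (snd s))\<bar> \<le> 1 * B"
      using elim q_pos bound[OF post_claim_le_b] \<open>x \<le> b\<close> by (intro mult_mono) auto
    then have "\<bar>exp (- q * fst s) * F (post_claim al c b x (fst s) (snd s))\<bar> \<le> B"
      by (simp add: abs_mult)
    ultimately show ?case
      by (auto simp: abs_le_iff)
  qed
qed (simp add: post_claim_def)

lemma one_step_V_ext:
  assumes x: "0 \<le> x" "x \<le> b"
  shows "one_step V_ext x = V x"
proof -
  let ?f = "\<lambda>s. div_period c q b x 0 (fst s) + exp (- q * fst s) * V_ext (post_claim al c b x (fst s) (snd s))"
  have "integrable MTU ?f"
    using V_ext_bound x by (intro one_step_integrable) auto
  then have "one_step V_ext x = (\<integral>t. (\<integral>u. ?f (t, u) \<partial>MU) \<partial>MT)"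
    unfolding one_step_def by (rule MTU.integral_fst'[symmetric])
  also have "\<dots> = (\<integral>t. div_period c q b x 0 t + exp (- q * t) * V_claim (min b (x + c * t)) \<partial>MT)"
  proof (rule integral_cong_AE)
    show "AE t in MT. (\<integral>u. ?f (t, u) \<partial>MU) = div_period c q b x 0 t + exp (- q * t) * V_claim (min b (x + c * t))"
      using AE_MT_nonneg
    proof eventually_elim
      case (elim t)
      define w where "w = min b (x + c * t)"
      have w: "0 \<le> w" "w \<le> b"
        unfolding w_def using elim x c_pos b_nonneg by auto
      have "integrable MU (\<lambda>u. V_ext (w - al * u))"
        by (rule MTU.M2.integrable_const_bound[where B = Vmax]) (auto simp: V_ext_bound)
      have "(\<integral>u. ?f (t, u) \<partial>MU) = (\<integral>u. div_period c q b x 0 t + exp (- q * t) * V_ext (w - al * u) \<partial>MU)"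
        by (simp add: post_claim_def w_def)
      also have "\<dots> = div_period c q b x 0 t + exp (- q * t) * (\<integral>u. V_ext (w - al * u) \<partial>MU)"
        using \<open>integrable MU (\<lambda>u. V_ext (w - al * u))\<close> MTU.M2.prob_space by simp
      also have "(\<integral>u. V_ext (w - al * u) \<partial>MU) = V_claim w"
        by (rule V_claim_integral[OF w])
      finally show ?case
        unfolding w_def .
    qed
  qed (auto simp: post_claim_def)
  also have "\<dots> = V x"
    by (rule V_wait_integral[OF x])
  finally show ?thesis .
qed

section \<open>The claim process\<close>

abbreviation "\<Omega> \<equiv> \<Pi>\<^sub>M i\<in>(UNIV :: nat set). MTU"

sublocale paths: sequence_space MTU
  by (simp add: sequence_space_def product_prob_space_def product_sigma_finite_def
      product_prob_space_axioms_def MTU.P.prob_space_axioms prob_space_imp_sigma_finite)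

lemma J_eq_integral: "JJ x = (\<integral>\<omega>. payoff al c q k a b x \<omega> \<partial>\<Omega>)"
  unfolding J_def claim_space_def ..

lemma measurable_wait [measurable]: "(\<lambda>\<omega>. fst (\<omega> n)) \<in> borel_measurable \<Omega>"
proof -
  have "(\<lambda>\<omega>. \<omega> n) \<in> measurable \<Omega> MTU"
    by (rule measurable_component_singleton) simp
  moreover have "fst \<in> measurable MTU MT"
    by (rule measurable_fst)
  moreover have "(\<lambda>t. t) \<in> measurable MT borel"
    by (simp add: measurable_cong_sets[OF sets_density refl])
  ultimately have "(\<lambda>t. t) \<circ> fst \<circ> (\<lambda>\<omega>. \<omega> n) \<in> borel_measurable \<Omega>"
    by (intro measurable_comp)
  then show ?thesis
    by (simp add: comp_def)
qed

lemma measurable_claim [measurable]: "(\<lambda>\<omega>. snd (\<omega> n)) \<in> borel_measurable \<Omega>"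
proof -
  have "(\<lambda>\<omega>. \<omega> n) \<in> measurable \<Omega> MTU"
    by (rule measurable_component_singleton) simp
  moreover have "snd \<in> measurable MTU MU"
    by (rule measurable_snd)
  moreover have "(\<lambda>u. u) \<in> measurable MU borel"
    by (simp add: measurable_cong_sets[OF sets_density refl])
  ultimately have "(\<lambda>u. u) \<circ> snd \<circ> (\<lambda>\<omega>. \<omega> n) \<in> borel_measurable \<Omega>"
    by (intro measurable_comp)
  then show ?thesis
    by (simp add: comp_def)
qed

lemma measurable_arrival [measurable]: "(\<lambda>\<omega>. arrival \<omega> n) \<in> borel_measurable \<Omega>"
  unfolding arrival_def by measurable

abbreviation "st x \<omega> n \<equiv> state al c a b x \<omega> n"

definition "reserve x \<omega> n = (case st x \<omega> n of None \<Rightarrow> 0 | Some y \<Rightarrow> y)"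

lemma state_Suc_ne_None: "st x \<omega> (Suc n) \<noteq> None \<longleftrightarrow>
   st x \<omega> n \<noteq> None \<and> \<not> post_claim al c b (reserve x \<omega> n) (fst (\<omega> n)) (snd (\<omega> n)) < - a"
  by (cases "st x \<omega> n") (auto simp: reserve_def Let_def)

lemma reserve_Suc: "reserve x \<omega> (Suc n) =
   (if st x \<omega> (Suc n) \<noteq> None then max 0 (post_claim al c b (reserve x \<omega> n) (fst (\<omega> n)) (snd (\<omega> n))) else 0)"
  by (cases "st x \<omega> n") (auto simp: reserve_def Let_def)

lemma measurable_state:
  assumes [measurable]: "X \<in> borel_measurable N" "Y \<in> measurable N \<Omega>"
  shows "Measurable.pred N (\<lambda>y. st (X y) (Y y) n \<noteq> None) \<and> (\<lambda>y. reserve (X y) (Y y) n) \<in> borel_measurable N"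
proof (induction n)
  case 0
  have "(\<lambda>y. reserve (X y) (Y y) 0) = (\<lambda>y. if X y < - a then 0 else max 0 (X y))"
    by (rule ext) (simp add: reserve_def)
  then show ?case
    by simp measurable
next
  case (Suc n)
  have [measurable]: "(\<lambda>y. fst (Y y i)) \<in> borel_measurable N" "(\<lambda>y. snd (Y y i)) \<in> borel_measurable N" for i
    using measurable_compose[OF assms(2) measurable_wait] measurable_compose[OF assms(2) measurable_claim] by auto
  from Suc have [measurable]: "Measurable.pred N (\<lambda>y. st (X y) (Y y) n \<noteq> None)"
    "(\<lambda>y. reserve (X y) (Y y) n) \<in> borel_measurable N" by auto
  show ?case
    unfolding state_Suc_ne_None reserve_Suc post_claim_def by (intro conjI; measurable)
qed

definition "payoff_term x \<omega> n = (case st x \<omega> n of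
    None \<Rightarrow> 0
  | Some y \<Rightarrow> div_period c q b y (arrival \<omega> n) (fst (\<omega> n))
      - k * exp (- q * arrival \<omega> (Suc n)) * injection a (post_claim al c b y (fst (\<omega> n)) (snd (\<omega> n))))"

lemma payoff_eq: "payoff al c q k a b x \<omega> = - k * injection a x + (\<Sum>n. payoff_term x \<omega> n)"
  unfolding payoff_def payoff_term_def injection_def by simp

lemma payoff_term_eq_reserve: "payoff_term x \<omega> n = (if st x \<omega> n \<noteq> None then
    div_period c q b (reserve x \<omega> n) (arrival \<omega> n) (fst (\<omega> n))
      - k * exp (- q * arrival \<omega> (Suc n)) * injection a (post_claim al c b (reserve x \<omega> n) (fst (\<omega> n)) (snd (\<omega> n)))
    else 0)"
  by (cases "st x \<omega> n") (auto simp: payoff_term_def reserve_def)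

lemma measurable_payoff:
  assumes [measurable]: "X \<in> borel_measurable N" "Y \<in> measurable N \<Omega>"
  shows "(\<lambda>y. payoff al c q k a b (X y) (Y y)) \<in> borel_measurable N"
proof -
  have [measurable]: "(\<lambda>y. fst (Y y i)) \<in> borel_measurable N" "(\<lambda>y. snd (Y y i)) \<in> borel_measurable N"
    "(\<lambda>y. arrival (Y y) i) \<in> borel_measurable N" for i
    using measurable_compose[OF assms(2) measurable_wait] measurable_compose[OF assms(2) measurable_claim]
      measurable_compose[OF assms(2) measurable_arrival] by auto
  have [measurable]: "Measurable.pred N (\<lambda>y. st (X y) (Y y) n \<noteq> None)"
    "(\<lambda>y. reserve (X y) (Y y) n) \<in> borel_measurable N" for n
    using measurable_state[OF assms] by auto
  have [measurable]: "(\<lambda>z. injection a z) \<in> borel_measurable borel"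
    unfolding injection_def by measurable
  have [measurable]: "(\<lambda>y. payoff_term (X y) (Y y) n) \<in> borel_measurable N" for n
    unfolding payoff_term_eq_reserve post_claim_def by measurable
  show ?thesis
    unfolding payoff_eq by measurable
qed

lemma payoff_measurable [measurable]: "payoff al c q k a b x \<in> borel_measurable \<Omega>"
  using measurable_payoff[of "\<lambda>_. x" \<Omega> "\<lambda>\<omega>. \<omega>"] by simp

lemma J_measurable [measurable]: "JJ \<in> borel_measurable borel"
proof -
  have "(\<lambda>(z, \<omega>). payoff al c q k a b z \<omega>) \<in> borel_measurable (borel \<Otimes>\<^sub>M \<Omega>)"
    using measurable_payoff[of fst "borel \<Otimes>\<^sub>M \<Omega>" snd] by (simp add: case_prod_beta')
  then show ?thesis
    unfolding J_eq_integral[abs_def] by (rule paths.P.borel_measurable_lebesgue_integral)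
qed

lemma state_shift:
  assumes "- a \<le> x"
  shows "st x (case_nat s \<omega>) (Suc n) = st (post_claim al c b (max 0 x) (fst s) (snd s)) \<omega> n"
  by (induction n) (use assms in \<open>simp_all add: Let_def split: option.split\<close>)

lemma arrival_shift: "arrival (case_nat s \<omega>) (Suc n) = fst s + arrival \<omega> n"
  unfolding arrival_def by (subst sum.lessThan_Suc_shift) simp

lemma payoff_term_shift:
  assumes "- a \<le> x"
  shows "payoff_term x (case_nat s \<omega>) (Suc n)
    = exp (- q * fst s) * payoff_term (post_claim al c b (max 0 x) (fst s) (snd s)) \<omega> n"
  unfolding payoff_term_def state_shift[OF assms] arrival_shift
  by (simp add: arrival_shift[of s \<omega> "Suc n", simplified] div_period_shift algebra_simps mult_exp_exp
      split: option.split)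

lemma payoff_term_0:
  assumes "- a \<le> x"
  shows "payoff_term x (case_nat s \<omega>) 0 = div_period c q b (max 0 x) 0 (fst s)
     - k * exp (- q * fst s) * injection a (post_claim al c b (max 0 x) (fst s) (snd s))"
  using assms unfolding payoff_term_def by (simp add: arrival_def)

text \<open>Renewal at the first claim, pathwise.\<close>

lemma payoff_shift:
  assumes "- a \<le> x" and summable: "summable (payoff_term (post_claim al c b (max 0 x) (fst s) (snd s)) \<omega>)"
  shows "payoff al c q k a b x (case_nat s \<omega>) = - k * injection a x + div_period c q b (max 0 x) 0 (fst s)
     + exp (- q * fst s) * payoff al c q k a b (post_claim al c b (max 0 x) (fst s) (snd s)) \<omega>"
proof -
  define z where "z = post_claim al c b (max 0 x) (fst s) (snd s)"
  have tail: "(\<lambda>n. payoff_term x (case_nat s \<omega>) (Suc n)) = (\<lambda>n. exp (- q * fst s) * payoff_term z \<omega> n)"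
    using payoff_term_shift[OF assms(1)] unfolding z_def by auto
  have "summable (\<lambda>n. payoff_term x (case_nat s \<omega>) (Suc n))"
    unfolding tail using summable unfolding z_def by (rule summable_mult)
  then have "(\<Sum>n. payoff_term x (case_nat s \<omega>) n)
      = payoff_term x (case_nat s \<omega>) 0 + (\<Sum>n. payoff_term x (case_nat s \<omega>) (Suc n))"
    by (simp add: suminf_split_head summable_Suc_iff)
  also have "(\<Sum>n. payoff_term x (case_nat s \<omega>) (Suc n)) = exp (- q * fst s) * (\<Sum>n. payoff_term z \<omega> n)"
    unfolding tail using summable unfolding z_def by (rule suminf_mult)
  finally show ?thesis
    unfolding payoff_eq payoff_term_0[OF assms(1)] z_def[symmetric] by (simp add: algebra_simps)
qed

definition "regular_path \<omega> \<longleftrightarrow>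
  (\<forall>n. 0 \<le> fst (\<omega> n) \<and> 0 \<le> snd (\<omega> n)) \<and> summable (\<lambda>n. exp (- q * arrival \<omega> n))"

lemma regular_path_shift:
  assumes "regular_path (case_nat s \<omega>)"
  shows "0 \<le> fst s" "0 \<le> snd s" "regular_path \<omega>"
proof -
  have nonneg: "\<forall>n. 0 \<le> fst (case_nat s \<omega> n) \<and> 0 \<le> snd (case_nat s \<omega> n)"
    and "summable (\<lambda>n. exp (- q * arrival (case_nat s \<omega>) n))"
    using assms unfolding regular_path_def by auto
  show "0 \<le> fst s" "0 \<le> snd s"
    using nonneg[rule_format, of 0] by auto
  have shifted: "summable (\<lambda>n. exp (q * fst s) * exp (- q * arrival (case_nat s \<omega>) (Suc n)))"
    using summable_Suc_iff[of "\<lambda>n. exp (- q * arrival (case_nat s \<omega>) n)"] \<open>summable _\<close>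
    by (intro summable_mult) simp
  have "(\<lambda>n. exp (q * fst s) * exp (- q * arrival (case_nat s \<omega>) (Suc n))) = (\<lambda>n. exp (- q * arrival \<omega> n))"
    unfolding arrival_shift by (simp add: exp_add[symmetric] algebra_simps)
  then have "summable (\<lambda>n. exp (- q * arrival \<omega> n))"
    using shifted by simp
  moreover have "\<forall>n. 0 \<le> fst (\<omega> n) \<and> 0 \<le> snd (\<omega> n)"
    using nonneg by (metis nat.simps(5))
  ultimately show "regular_path \<omega>"
    unfolding regular_path_def by simp
qed

lemma state_range:
  assumes "x \<le> b" "\<forall>i. 0 \<le> snd (\<omega> i)" "st x \<omega> n = Some y"
  shows "0 \<le> y \<and> y \<le> b"
  using assms(3)
proof (induction n arbitrary: y)
  case 0
  then show ?case using assms(1) b_nonneg by (auto split: if_splits)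
next
  case (Suc n)
  then obtain y' where y': "st x \<omega> n = Some y'"
    by (cases "st x \<omega> n") auto
  then have "0 \<le> y' \<and> y' \<le> b"
    using Suc by auto
  moreover have "0 \<le> al * snd (\<omega> n)"
    using assms(2) al_pos by simp
  ultimately show ?case
    using Suc.prems y' b_nonneg by (auto simp: Let_def post_claim_def split: if_splits)
qed

lemma payoff_term_bound:
  assumes "x \<le> b" "regular_path \<omega>"
  shows "\<bar>payoff_term x \<omega> n\<bar> \<le> (c / q + k * a) * exp (- q * arrival \<omega> n)"
proof (cases "st x \<omega> n")
  case None
  then show ?thesis
    unfolding payoff_term_def using c_pos q_pos k_nonneg a_pos by simp
next
  case (Some y)
  have nonneg: "\<forall>i. 0 \<le> fst (\<omega> i)" "\<forall>i. 0 \<le> snd (\<omega> i)"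
    using assms(2) unfolding regular_path_def by auto
  have "y \<le> b"
    using state_range[OF assms(1) nonneg(2) Some] by auto
  then have d: "0 \<le> div_period c q b y (arrival \<omega> n) (fst (\<omega> n))"
      "div_period c q b y (arrival \<omega> n) (fst (\<omega> n)) \<le> c / q * exp (- q * arrival \<omega> n)"
    using div_period_bounds[OF c_pos q_pos] by auto
  define I where "I = injection a (post_claim al c b y (fst (\<omega> n)) (snd (\<omega> n)))"
  have I: "0 \<le> I" "I \<le> a"
    unfolding I_def injection_def using a_pos by auto
  have "exp (- q * arrival \<omega> (Suc n)) \<le> exp (- q * arrival \<omega> n)"
    using nonneg(1) q_pos by (simp add: arrival_def)
  then have "0 \<le> k * exp (- q * arrival \<omega> (Suc n)) * I" "k * exp (- q * arrival \<omega> (Suc n)) * I \<le> k * exp (- q * arrival \<omega> n) * a"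
    using I k_nonneg by (auto intro!: mult_mono)
  then have "\<bar>div_period c q b y (arrival \<omega> n) (fst (\<omega> n)) - k * exp (- q * arrival \<omega> (Suc n)) * I\<bar>
      \<le> c / q * exp (- q * arrival \<omega> n) + k * exp (- q * arrival \<omega> n) * a"
    using d by linarith
  then show ?thesis
    unfolding payoff_term_def Some I_def by (simp add: algebra_simps)
qed

lemma payoff_term_summable:
  assumes "x \<le> b" "regular_path \<omega>"
  shows "summable (\<lambda>n. \<bar>payoff_term x \<omega> n\<bar>)"
proof (rule summable_comparison_test)
  show "\<exists>N. \<forall>n\<ge>N. norm \<bar>payoff_term x \<omega> n\<bar> \<le> (c / q + k * a) * exp (- q * arrival \<omega> n)"
    using payoff_term_bound[OF assms] by auto
  show "summable (\<lambda>n. (c / q + k * a) * exp (- q * arrival \<omega> n))"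
    using assms(2) unfolding regular_path_def by (intro summable_mult) auto
qed

definition "discount_sum \<omega> = (\<Sum>n. exp (- q * arrival \<omega> n))"

lemma payoff_bound:
  assumes "x \<le> b" "regular_path \<omega>"
  shows "\<bar>payoff al c q k a b x \<omega>\<bar> \<le> k * a + (c / q + k * a) * discount_sum \<omega>"
proof -
  have "summable (\<lambda>n. exp (- q * arrival \<omega> n))"
    using assms(2) unfolding regular_path_def by simp
  then have "(\<Sum>n. \<bar>payoff_term x \<omega> n\<bar>) \<le> (\<Sum>n. (c / q + k * a) * exp (- q * arrival \<omega> n))"
    using payoff_term_summable[OF assms] payoff_term_bound[OF assms]
    by (intro suminf_le summable_mult) auto
  also have "\<dots> = (c / q + k * a) * discount_sum \<omega>"
    unfolding discount_sum_def using \<open>summable _\<close> by (rule suminf_mult)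
  finally have "\<bar>\<Sum>n. payoff_term x \<omega> n\<bar> \<le> (c / q + k * a) * discount_sum \<omega>"
    using summable_rabs[OF payoff_term_summable[OF assms]] by linarith
  moreover have "\<bar>k * injection a x\<bar> \<le> k * a"
    unfolding injection_def using k_nonneg a_pos mult_left_mono[of "- x" a k] by (auto simp: abs_mult)
  ultimately show ?thesis
    unfolding payoff_eq by linarith
qed

text \<open>The Laplace transform of the waiting time at \<open>q\<close>, the contraction factor of the argument.\<close>

definition "\<theta> = lam / (lam + q)"

lemma \<theta>_pos: "0 < \<theta>" and \<theta>_less_1: "\<theta> < 1"
  unfolding \<theta>_def using lam_pos q_pos by auto

lemma has_bochner_integral_first_discount: "has_bochner_integral MTU (\<lambda>s. exp (- q * fst s)) \<theta>"
proof -
  have int: "integrable MTU (\<lambda>s. exp (- q * fst s))"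
    using AE_MTU_nonneg q_pos
    by (intro MTU.P.integrable_const_bound[where B = 1]) (auto elim!: eventually_mono)
  have "(\<integral>s. exp (- q * fst s) \<partial>MTU) = (\<integral>t. (\<integral>u. exp (- q * t) \<partial>MU) \<partial>MT)"
    using MTU.integral_fst'[OF int] by simp
  also have "\<dots> = (\<integral>t. exp (- q * t) \<partial>MT)"
    using MTU.M2.prob_space by simp
  also have "\<dots> = \<theta>"
    using has_bochner_integral_exponential_Laplace[OF lam_pos, of q] q_pos
    unfolding \<theta>_def by (simp add: has_bochner_integral_iff)
  finally show ?thesis
    using int by (simp add: has_bochner_integral_iff)
qed

lemma nn_integral_discount: "(\<integral>\<^sup>+\<omega>. ennreal (exp (- q * arrival \<omega> n)) \<partial>\<Omega>) = ennreal \<theta> ^ n"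
proof (induction n)
  case 0
  then show ?case
    by (simp add: arrival_def paths.emeasure_space_1)
next
  case (Suc n)
  have "(\<integral>\<^sup>+\<omega>. ennreal (exp (- q * arrival \<omega> (Suc n))) \<partial>\<Omega>)
      = (\<integral>\<^sup>+s. \<integral>\<^sup>+\<omega>. ennreal (exp (- q * arrival (case_nat s \<omega>) (Suc n))) \<partial>\<Omega> \<partial>MTU)"
    by (rule paths.nn_integral_PiM_iter) measurable
  also have "\<dots> = (\<integral>\<^sup>+s. ennreal (exp (- q * fst s)) * (\<integral>\<^sup>+\<omega>. ennreal (exp (- q * arrival \<omega> n)) \<partial>\<Omega>) \<partial>MTU)"
    unfolding arrival_shift
    by (subst nn_integral_cmult[symmetric])
       (auto simp: ennreal_mult[symmetric] exp_add[symmetric] algebra_simps intro!: nn_integral_cong)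
  also have "\<dots> = (\<integral>\<^sup>+s. ennreal (exp (- q * fst s)) \<partial>MTU) * ennreal \<theta> ^ n"
    unfolding Suc by (subst nn_integral_multc) auto
  also have "(\<integral>\<^sup>+s. ennreal (exp (- q * fst s)) \<partial>MTU) = ennreal \<theta>"
    using has_bochner_integral_first_discount by (subst nn_integral_eq_integral) (auto simp: has_bochner_integral_iff)
  finally show ?case
    by simp
qed

lemma nn_integral_discount_sum: "(\<integral>\<^sup>+\<omega>. (\<Sum>n. ennreal (exp (- q * arrival \<omega> n))) \<partial>\<Omega>) = ennreal (1 / (1 - \<theta>))"
proof -
  have "(\<integral>\<^sup>+\<omega>. (\<Sum>n. ennreal (exp (- q * arrival \<omega> n))) \<partial>\<Omega>) = (\<Sum>n. ennreal \<theta> ^ n)"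
    by (subst nn_integral_suminf) (auto simp: nn_integral_discount[simplified])
  also have "\<dots> = (\<Sum>n. ennreal (\<theta> ^ n))"
    using \<theta>_pos by (simp add: ennreal_power)
  also have "\<dots> = ennreal (\<Sum>n. \<theta> ^ n)"
    using geometric_sums[of \<theta>] \<theta>_pos \<theta>_less_1 by (intro suminf_ennreal2) (auto simp: sums_iff)
  finally show ?thesis
    using geometric_sums[of \<theta>] \<theta>_pos \<theta>_less_1 by (simp add: sums_iff)
qed

lemma AE_regular_path: "AE \<omega> in \<Omega>. regular_path \<omega>"
proof -
  have "AE \<omega> in \<Omega>. \<forall>n. 0 \<le> fst (\<omega> n) \<and> 0 \<le> snd (\<omega> n)"
  proof (rule AE_all_countable[THEN iffD2], rule allI)
    fix n
    show "AE \<omega> in \<Omega>. 0 \<le> fst (\<omega> n) \<and> 0 \<le> snd (\<omega> n)"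
      using AE_PiM_component[of UNIV "\<lambda>_. MTU" n "\<lambda>s. 0 \<le> fst s \<and> 0 \<le> snd s"] AE_MTU_nonneg
        MTU.P.prob_space_axioms by auto
  qed
  moreover have "AE \<omega> in \<Omega>. (\<Sum>n. ennreal (exp (- q * arrival \<omega> n))) \<noteq> \<infinity>"
    by (rule nn_integral_PInf_AE) (auto simp: nn_integral_discount_sum[simplified])
  ultimately show ?thesis
    unfolding regular_path_def by eventually_elim (auto intro: summable_suminf_not_top)
qed

lemma discount_sum_measurable [measurable]: "discount_sum \<in> borel_measurable \<Omega>"
  unfolding discount_sum_def[abs_def] by measurable

lemma has_bochner_integral_discount_sum: "has_bochner_integral \<Omega> discount_sum (1 / (1 - \<theta>))"
proof -
  have nonneg: "AE \<omega> in \<Omega>. 0 \<le> discount_sum \<omega>"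
    using AE_regular_path
    by eventually_elim (auto simp: discount_sum_def regular_path_def intro!: suminf_nonneg)
  have "AE \<omega> in \<Omega>. ennreal (discount_sum \<omega>) = (\<Sum>n. ennreal (exp (- q * arrival \<omega> n)))"
    using AE_regular_path
    by eventually_elim (auto simp: discount_sum_def regular_path_def suminf_ennreal2)
  then have nn: "(\<integral>\<^sup>+\<omega>. ennreal (discount_sum \<omega>) \<partial>\<Omega>) = ennreal (1 / (1 - \<theta>))"
    using nn_integral_discount_sum by (simp add: nn_integral_cong_AE)
  have int: "integrable \<Omega> discount_sum"
    using nonneg nn by (intro integrableI_nonneg) (auto simp: discount_sum_def)
  then have "ennreal (\<integral>\<omega>. discount_sum \<omega> \<partial>\<Omega>) = ennreal (1 / (1 - \<theta>))"
    using nn_integral_eq_integral[OF int nonneg] nn by simp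
  then have "(\<integral>\<omega>. discount_sum \<omega> \<partial>\<Omega>) = 1 / (1 - \<theta>)"
    using \<theta>_less_1 nonneg by (subst (asm) ennreal_inj) (auto simp: integral_nonneg_AE)
  with int show ?thesis
    by (simp add: has_bochner_integral_iff)
qed

definition "Jmax = k * a + (c / q + k * a) / (1 - \<theta>)"

lemma payoff_integrable_bound:
  assumes "x \<le> b"
  shows "integrable \<Omega> (payoff al c q k a b x)" "\<bar>JJ x\<bar> \<le> Jmax"
proof -
  have bound_int: "has_bochner_integral \<Omega> (\<lambda>\<omega>. k * a + (c / q + k * a) * discount_sum \<omega>) Jmax"
    using has_bochner_integral_discount_sum paths.P.prob_space
    by (auto simp: has_bochner_integral_iff Jmax_def)
  have bound: "AE \<omega> in \<Omega>. \<bar>payoff al c q k a b x \<omega>\<bar> \<le> k * a + (c / q + k * a) * discount_sum \<omega>"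
    using AE_regular_path by eventually_elim (rule payoff_bound[OF assms])
  show int: "integrable \<Omega> (payoff al c q k a b x)"
  proof (rule Bochner_Integration.integrable_bound)
    show "integrable \<Omega> (\<lambda>\<omega>. k * a + (c / q + k * a) * discount_sum \<omega>)"
      using bound_int by (simp add: has_bochner_integral_iff)
    show "AE \<omega> in \<Omega>. norm (payoff al c q k a b x \<omega>) \<le> norm (k * a + (c / q + k * a) * discount_sum \<omega>)"
      using bound by eventually_elim (metis abs_ge_self order_trans real_norm_def)
  qed simp
  have "\<bar>JJ x\<bar> \<le> (\<integral>\<omega>. \<bar>payoff al c q k a b x \<omega>\<bar> \<partial>\<Omega>)"
    unfolding J_eq_integral by (rule integral_abs_bound)
  also have "\<dots> \<le> (\<integral>\<omega>. k * a + (c / q + k * a) * discount_sum \<omega> \<partial>\<Omega>)"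
    by (rule integral_mono_AE) (use int bound bound_int in \<open>auto simp: has_bochner_integral_iff\<close>)
  also have "\<dots> = Jmax"
    using bound_int by (simp add: has_bochner_integral_iff)
  finally show "\<bar>JJ x\<bar> \<le> Jmax" .
qed

lemma J_below: "x < - a \<Longrightarrow> JJ x = 0"
proof -
  assume x: "x < - a"
  then have "st x \<omega> n = None" for \<omega> n
    by (induction n) auto
  then have "payoff al c q k a b x = (\<lambda>\<omega>. 0)"
    using x unfolding payoff_eq[abs_def] payoff_term_def injection_def by simp
  then show ?thesis
    unfolding J_eq_integral by simp
qed

lemma J_band:
  assumes "- a \<le> x" "x \<le> 0"
  shows "JJ x = k * x + JJ 0"
proof -
  have "st x \<omega> n = st 0 \<omega> n" for \<omega> n
    using assms by (induction n) (auto simp: Let_def)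
  then have "payoff al c q k a b x = (\<lambda>\<omega>. k * x + payoff al c q k a b 0 \<omega>)"
    using assms unfolding payoff_eq[abs_def] payoff_term_def injection_def by auto
  then show ?thesis
    unfolding J_eq_integral
    using payoff_integrable_bound(1)[OF b_nonneg] paths.P.prob_space by simp
qed

section \<open>Identification of \<open>J\<close> with the candidate\<close>

lemma payoff_first_claim:
  assumes "0 \<le> x" "x \<le> b"
  shows "AE y in MTU \<Otimes>\<^sub>M \<Omega>. payoff al c q k a b x (case_nat (fst y) (snd y))
    = div_period c q b x 0 (fst (fst y))
      + exp (- q * fst (fst y)) * payoff al c q k a b (post_claim al c b x (fst (fst y)) (snd (fst y))) (snd y)"
  using paths.AE_PiM_iter[OF AE_regular_path]
proof eventually_elim
  case (elim y)
  obtain s \<omega> where y: "y = (s, \<omega>)"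
    by (cases y)
  have "0 \<le> fst s" "0 \<le> snd s" "regular_path \<omega>"
    using regular_path_shift elim y by auto
  then have "summable (payoff_term (post_claim al c b x (fst s) (snd s)) \<omega>)"
    using payoff_term_summable[OF post_claim_le_b] assms summable_rabs_cancel by blast
  then show ?case
    using payoff_shift[of x s \<omega>] assms a_pos y by (simp add: injection_def)
qed

lemma J_one_step:
  assumes x: "0 \<le> x" "x \<le> b"
  shows "JJ x = one_step JJ x"
proof -
  interpret MTU_paths: pair_prob_space MTU \<Omega>
    by (simp add: pair_prob_space.intro pair_sigma_finite.intro prob_space_imp_sigma_finite
        MTU.P.prob_space_axioms paths.P.prob_space_axioms)
  let ?h = "\<lambda>y. div_period c q b x 0 (fst (fst y))
      + exp (- q * fst (fst y)) * payoff al c q k a b (post_claim al c b x (fst (fst y)) (snd (fst y))) (snd y)"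
  have h_meas: "?h \<in> borel_measurable (MTU \<Otimes>\<^sub>M \<Omega>)"
    using measurable_payoff[of "\<lambda>y. post_claim al c b x (fst (fst y)) (snd (fst y))" "MTU \<Otimes>\<^sub>M \<Omega>" snd]
    unfolding post_claim_def by measurable
  have "integrable (MTU \<Otimes>\<^sub>M \<Omega>) (\<lambda>y. payoff al c q k a b x (case_nat (fst y) (snd y)))"
    using paths.integrable_PiM_iter[OF payoff_integrable_bound(1)[OF x(2)]] .
  then have int: "integrable (MTU \<Otimes>\<^sub>M \<Omega>) ?h"
    using payoff_first_claim[OF x] h_meas by (subst integrable_cong_AE[symmetric]) auto
  have "JJ x = (\<integral>y. ?h y \<partial>(MTU \<Otimes>\<^sub>M \<Omega>))"
    unfolding J_eq_integral paths.integral_PiM_iter[OF payoff_measurable]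
    using payoff_first_claim[OF x] h_meas by (intro integral_cong_AE) auto
  also have "\<dots> = (\<integral>s. (\<integral>\<omega>. ?h (s, \<omega>) \<partial>\<Omega>) \<partial>MTU)"
    using MTU_paths.integral_fst'[OF int] by simp
  also have "\<dots> = one_step JJ x"
    unfolding one_step_def
  proof (rule integral_cong_AE)
    show "AE s in MTU. (\<integral>\<omega>. ?h (s, \<omega>) \<partial>\<Omega>)
        = div_period c q b x 0 (fst s) + exp (- q * fst s) * JJ (post_claim al c b x (fst s) (snd s))"
      using AE_MTU_nonneg
    proof eventually_elim
      case (elim s)
      then have "post_claim al c b x (fst s) (snd s) \<le> b"
        using post_claim_le_b x by auto
      then show ?case
        unfolding J_eq_integral using payoff_integrable_bound(1) paths.P.prob_space by simp
    qed
  qed (use int in \<open>auto intro: paths.P.borel_measurable_lebesgue_integral simp: post_claim_def split_beta'\<close>)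
  finally show ?thesis .
qed

lemma one_step_diff_bound:
  assumes [measurable]: "F \<in> borel_measurable borel" "G \<in> borel_measurable borel"
    and "\<And>z. z \<le> b \<Longrightarrow> \<bar>F z\<bar> \<le> BF" "\<And>z. z \<le> b \<Longrightarrow> \<bar>G z\<bar> \<le> BG"
    and diff: "\<And>z. z \<le> b \<Longrightarrow> \<bar>F z - G z\<bar> \<le> B" and "x \<le> b"
  shows "\<bar>one_step F x - one_step G x\<bar> \<le> \<theta> * B"
proof -
  let ?P = "\<lambda>s. post_claim al c b x (fst s) (snd s)"
  let ?A = "\<lambda>s. div_period c q b x 0 (fst s) + exp (- q * fst s) * F (?P s)"
  let ?B = "\<lambda>s. div_period c q b x 0 (fst s) + exp (- q * fst s) * G (?P s)"
  let ?D = "\<lambda>s. exp (- q * fst s) * (F (?P s) - G (?P s))"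
  have A: "integrable MTU ?A" and B: "integrable MTU ?B"
    using assms by (intro one_step_integrable; blast)+
  have "(\<lambda>s. ?A s - ?B s) = ?D"
    by (simp add: algebra_simps)
  then have D: "integrable MTU ?D"
    using Bochner_Integration.integrable_diff[OF A B] by simp
  have "one_step F x - one_step G x = (\<integral>s. ?A s - ?B s \<partial>MTU)"
    unfolding one_step_def by (rule Bochner_Integration.integral_diff[OF A B, symmetric])
  also have "\<dots> = (\<integral>s. ?D s \<partial>MTU)"
    by (simp add: algebra_simps)
  finally have "\<bar>one_step F x - one_step G x\<bar> \<le> (\<integral>s. \<bar>?D s\<bar> \<partial>MTU)"
    using integral_abs_bound by simp
  also have "\<dots> \<le> (\<integral>s. exp (- q * fst s) * B \<partial>MTU)"
  proof (rule integral_mono_AE)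
    show "integrable MTU (\<lambda>s. \<bar>?D s\<bar>)"
      using D by simp
    show "integrable MTU (\<lambda>s. exp (- q * fst s) * B)"
      using has_bochner_integral_first_discount by (simp add: has_bochner_integral_iff)
    show "AE s in MTU. \<bar>?D s\<bar> \<le> exp (- q * fst s) * B"
      using AE_MTU_nonneg
    proof eventually_elim
      case (elim s)
      then have "\<bar>F (?P s) - G (?P s)\<bar> \<le> B"
        using diff post_claim_le_b \<open>x \<le> b\<close> by simp
      then show ?case
        by (simp add: abs_mult)
    qed
  qed
  also have "\<dots> = \<theta> * B"
    using has_bochner_integral_first_discount by (simp add: has_bochner_integral_iff)
  finally show ?thesis .
qed

lemma J_minus_V_ext_contraction:
  assumes bound: "\<And>z. z \<le> b \<Longrightarrow> \<bar>JJ z - V_ext z\<bar> \<le> B" and "y \<le> b"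
  shows "\<bar>JJ y - V_ext y\<bar> \<le> \<theta> * B"
proof -
  have inside: "\<bar>JJ x - V_ext x\<bar> \<le> \<theta> * B" if x: "0 \<le> x" "x \<le> b" for x
  proof -
    have "JJ x - V_ext x = one_step JJ x - one_step V_ext x"
      using J_one_step[OF x] one_step_V_ext[OF x] x a_pos by (simp add: V_ext_def)
    also have "\<bar>\<dots>\<bar> \<le> \<theta> * B"
      using payoff_integrable_bound(2) V_ext_bound bound x by (intro one_step_diff_bound) auto
    finally show ?thesis .
  qed
  consider "y < - a" | "- a \<le> y" "y < 0" | "0 \<le> y"
    by linarith
  then show ?thesis
  proof cases
    case 1
    then show ?thesis
      using bound[of b] \<theta>_pos J_below[OF 1] by (simp add: V_ext_def)
  next
    case 2
    then have "JJ y - V_ext y = JJ 0 - V_ext 0"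
      using J_band[of y] V_0 b_nonneg by (simp add: V_ext_def)
    then show ?thesis
      using inside[of 0] b_nonneg by simp
  qed (use inside \<open>y \<le> b\<close> in simp)
qed

theorem J_eq_V:
  assumes "0 \<le> x" "x \<le> b"
  shows "JJ x = V x"
proof -
  have "JJ x - V_ext x = 0"
  proof (rule bounded_contraction_eq_0[where f = "\<lambda>z. JJ z - V_ext z" and A = "{..b}" and M = "Jmax + Vmax"])
    show "\<bar>JJ y - V_ext y\<bar> \<le> Jmax + Vmax" if "y \<in> {..b}" for y
      using payoff_integrable_bound(2)[of y] V_ext_bound[of y] that by (simp add: abs_diff_le_iff abs_le_iff)
  qed (use \<theta>_pos \<theta>_less_1 J_minus_V_ext_contraction assms in auto)
  then show ?thesis
    using assms a_pos by (simp add: V_ext_def)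
qed

lemma J_0: "JJ 0 = J0"
  using J_eq_V[of 0] b_nonneg V_0 by simp

lemma J_scale_representation:
  assumes "0 \<le> x" "x \<le> b"
  shows "JJ x = W x / W b * JJ b + (Z x - W x / W b * Z b) * zfun al mu k a (JJ 0)"
    and "JJ x - zfun al mu k a (JJ 0) * Z x = W x / W b * (JJ b - zfun al mu k a (JJ 0) * Z b)"
proof -
  have J: "JJ y = AW * W y + z0 * Z y" if "0 \<le> y" "y \<le> b" for y
    using J_eq_V[OF that] V_eq_W_Z Zq_eq_Zexp[OF that(1)] by simp
  have "0 < W b"
    using Wq_pos b_nonneg by simp
  then show "JJ x = W x / W b * JJ b + (Z x - W x / W b * Z b) * zfun al mu k a (JJ 0)"
    and "JJ x - zfun al mu k a (JJ 0) * Z x = W x / W b * (JJ b - zfun al mu k a (JJ 0) * Z b)"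
    unfolding J[OF assms] J[OF b_nonneg order_refl] J_0 z0_def[symmetric] by (simp_all add: field_simps)
qed

lemma J_eq_G_S:
  assumes "0 \<le> x" "x \<le> b"
  shows "JJ x = k * Gfun al c lam mu q a x + JJ 0 * Sfun al c lam mu q a x"
  using J_eq_V[OF assms] V_eq_G_S[OF assms(1)] J_0 by simp

lemma Cq_has_derivative_right: "(Cq al c lam mu q has_real_derivative dC) (at_right b)"
proof -
  have "((\<lambda>y. c * W y - Z y) has_real_derivative c * dW b - q * W b) (at_right b)"
    by (intro DERIV_diff DERIV_cmult Wq_has_derivative Zq_has_derivative_right)
  then show ?thesis
    unfolding Cq_def[abs_def] dC_def .
qed

lemma J_0_derivative_formula:
  "\<exists>G' S' C'.
     ((\<lambda>y. Gfun al c lam mu q a y) has_real_derivative G') (at_right b)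
   \<and> ((\<lambda>y. Sfun al c lam mu q a y) has_real_derivative S') (at_right b)
   \<and> (Cq al c lam mu q has_real_derivative C') (at_right b)
   \<and> JJ 0 = (1 - k * G') / S'
   \<and> JJ 0 = (1 - k * m_al al mu a * C') / (exp (- (mu / al) * a) * C' + q * W b)"
proof (intro exI conjI)
  show "((\<lambda>y. Gfun al c lam mu q a y) has_real_derivative ma * dC) (at_right b)"
    unfolding Gfun_def ma_def[symmetric] by (intro DERIV_cmult Cq_has_derivative_right)
  show "((\<lambda>y. Sfun al c lam mu q a y) has_real_derivative dS) (at_right b)"
    unfolding Sfun_def ea_def[symmetric] dS_def
    by (intro DERIV_add DERIV_cmult Cq_has_derivative_right Zq_has_derivative_right)
  show "(Cq al c lam mu q has_real_derivative dC) (at_right b)"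
    by (rule Cq_has_derivative_right)
  show "JJ 0 = (1 - k * (ma * dC)) / dS" "JJ 0 = (1 - k * m_al al mu a * dC) / (exp (- (mu / al) * a) * dC + q * W b)"
    unfolding J_0 J0_def dS_def ma_def ea_def by (simp_all add: mult.assoc)
qed

end

theorem proposition4p2:
  fixes al c lam mu q k a b :: real
  assumes "0 < al" "al \<le> 1" "0 < lam" "0 < mu" "0 < q" "0 < c" "1 \<le> k" "0 < a" "0 \<le> b"
  defines "W \<equiv> Wq al c lam mu q" and "Z \<equiv> Zq al c lam mu q" and "C \<equiv> Cq al c lam mu q"
      and "JJ \<equiv> J al c lam mu q k a b"
      and "z \<equiv> zfun al mu k a (J al c lam mu q k a b 0)"
  shows
    "(\<forall>x. 0 \<le> x \<and> x \<le> b \<longrightarrow>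
        JJ x = W x / W b * JJ b + (Z x - W x / W b * Z b) * z)
     \<and> (\<forall>x. 0 \<le> x \<and> x \<le> b \<longrightarrow>
        JJ x - z * Z x = W x / W b * (JJ b - z * Z b))
     \<and> (\<forall>x. x < - a \<longrightarrow> JJ x = 0)
     \<and> (\<forall>x. - a \<le> x \<and> x \<le> 0 \<longrightarrow> JJ x = k * x + JJ 0)
     \<and> (\<forall>x. 0 < x \<and> x \<le> b \<longrightarrow>
        JJ x = k * Gfun al c lam mu q a x + JJ 0 * Sfun al c lam mu q a x)
     \<and> (\<exists>G' S' C'.
          ((\<lambda>y. Gfun al c lam mu q a y) has_real_derivative G') (at_right b)
        \<and> ((\<lambda>y. Sfun al c lam mu q a y) has_real_derivative S') (at_right b)
        \<and> (C has_real_derivative C') (at_right b)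
        \<and> JJ 0 = (1 - k * G') / S'
        \<and> JJ 0 = (1 - k * m_al al mu a * C') / (exp (- (mu / al) * a) * C' + q * W b))"
proof -
  interpret injection_barrier_model al c lam mu q k a b
    using assms(1,3-9) by unfold_locales auto
  show ?thesis
    unfolding W_def Z_def C_def JJ_def z_def
    by (intro conjI allI impI)
       (blast intro: J_scale_representation J_below J_band J_eq_G_S J_0_derivative_formula less_imp_le)+
qed

end
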